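(* Let $T$ be a finite tree with vertex set $\{u_1,\dots,u_n\}$, and let \[\cdots\to R^c(-4)\oplus R^b(-3)\to R^q(-2)\to R\to R/I(L(T))\to 0\] be the minimal graded free resolution of $R/I(L(T))$ (so $b=\beta_{2,3}(R/I(L(T)))$). Then \[b=\sum_{\{u_i,u_j\}\in E(T)}\binom{\deg u_i+\deg u_j-2}{2}-\sum_{i=1}^n\binom{\deg u_i}{3}.\]
   Context: Degrees are taken in $T$. The line graph $L(T)$ has vertex set $E(T)$, two vertices adjacent iff the corresponding edges share a vertex. $R=\Bbbk[e_{uv}:\{u,v\}\in E(T)]$ for a field $\Bbbk$, and $I(L(T))=\langle e_fe_g: f\neq g\in E(T),\ f\cap g\neq\emptyset\rangle$ is the edge ideal of $L(T)$. *)

theory Defs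
  imports Main "HOL-Library.Poly_Mapping"
begin

definition simple_graph :: "'v set \<Rightarrow> 'v set set \<Rightarrow> bool" where
  "simple_graph V E \<longleftrightarrow> finite V \<and> (\<forall>e\<in>E. \<exists>x y. x \<in> V \<and> y \<in> V \<and> x \<noteq> y \<and> e = {x, y})"

definition graph_connected :: "'v set \<Rightarrow> 'v set set \<Rightarrow> bool" where
  "graph_connected V E \<longleftrightarrow> (\<forall>x\<in>V. \<forall>y\<in>V. (\<lambda>a b. {a, b} \<in> E)\<^sup>*\<^sup>* x y)"

definition graph_acyclic :: "'v set \<Rightarrow> 'v set set \<Rightarrow> bool" where
  "graph_acyclic V E \<longleftrightarrow> \<not> (\<exists>cs. 3 \<le> length cs \<and> distinct cs \<and> set cs \<subseteq> V \<and>
       (\<forall>i < length cs. {cs ! i, cs ! ((i + 1) mod length cs)} \<in> E))"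

definition is_tree :: "'v set \<Rightarrow> 'v set set \<Rightarrow> bool" where
  "is_tree V E \<longleftrightarrow> simple_graph V E \<and> V \<noteq> {} \<and> graph_connected V E \<and> graph_acyclic V E"

definition vdeg :: "'v set set \<Rightarrow> 'v \<Rightarrow> nat" where
  "vdeg E u = card {e \<in> E. u \<in> e}"

type_synonym ('x, 'k) mpoly = "('x \<Rightarrow>\<^sub>0 nat) \<Rightarrow>\<^sub>0 'k"

definition var :: "'x \<Rightarrow> ('x, 'k::comm_ring_1) mpoly" where
  "var x = Poly_Mapping.single (Poly_Mapping.single x 1) 1"

definition mon_deg :: "('x \<Rightarrow>\<^sub>0 nat) \<Rightarrow> nat" where
  "mon_deg m = sum (Poly_Mapping.lookup m) (Poly_Mapping.keys m)"

text \<open>p is homogeneous of (standard) degree d (the zero polynomial is homogeneous of every degree).\<close>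
definition homog :: "nat \<Rightarrow> ('x, 'k::zero) mpoly \<Rightarrow> bool" where
  "homog d p \<longleftrightarrow> (\<forall>m \<in> Poly_Mapping.keys p. mon_deg m = d)"

definition in_ring :: "'x set \<Rightarrow> ('x, 'k::zero) mpoly \<Rightarrow> bool" where
  "in_ring X p \<longleftrightarrow> (\<forall>m \<in> Poly_Mapping.keys p. Poly_Mapping.keys m \<subseteq> X)"

definition ideal_gen :: "'x set \<Rightarrow> ('x, 'k::comm_ring_1) mpoly set \<Rightarrow> ('x, 'k) mpoly set" where
  "ideal_gen X G = {p. \<exists>F c. finite F \<and> F \<subseteq> G \<and> (\<forall>s\<in>F. in_ring X (c s)) \<and> p = (\<Sum>s\<in>F. c s * s)}"

text \<open>Edge ideal of the line graph L(T): generated by e_f e_g for distinct edges f, g sharing a vertex.\<close>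
definition line_edge_ideal :: "'v set set \<Rightarrow> ('v set, 'k::comm_ring_1) mpoly set" where
  "line_edge_ideal E = ideal_gen E {var f * var g | f g. f \<in> E \<and> g \<in> E \<and> f \<noteq> g \<and> f \<inter> g \<noteq> {}}"

text \<open>
  A graded free resolution of R/I, R = k[X], is encoded by
  r i   : rank of F_i,
  a i j : shift of the j-th basis element of F_i (j < r i), i.e. F_i = \<Oplus>_j R(-a i j),
  M i k j (i \<ge> 1) : the (k,j) matrix entry of the differential F_i \<rightarrow> F_(i-1),
          i.e. the image of the j-th basis vector of F_i has k-th coordinate M i k j.
  Elements of F_i are vectors nat \<Rightarrow> polynomial supported on {..< r i} with entries in R.
\<close>

definition vec_in :: "'x set \<Rightarrow> nat \<Rightarrow> (nat \<Rightarrow> ('x, 'k::zero) mpoly) \<Rightarrow> bool" where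
  "vec_in X n v \<longleftrightarrow> (\<forall>j<n. in_ring X (v j)) \<and> (\<forall>j\<ge>n. v j = 0)"

definition diff_apply ::
  "(nat \<Rightarrow> nat) \<Rightarrow> (nat \<Rightarrow> nat \<Rightarrow> nat \<Rightarrow> ('x, 'k::comm_ring_1) mpoly) \<Rightarrow> nat
    \<Rightarrow> (nat \<Rightarrow> ('x, 'k) mpoly) \<Rightarrow> (nat \<Rightarrow> ('x, 'k) mpoly)" where
  "diff_apply r M i v = (\<lambda>k. if k < r (i - 1) then (\<Sum>j<r i. M i k j * v j) else 0)"

definition diff_image ::
  "'x set \<Rightarrow> (nat \<Rightarrow> nat) \<Rightarrow> (nat \<Rightarrow> nat \<Rightarrow> nat \<Rightarrow> ('x, 'k::comm_ring_1) mpoly) \<Rightarrow> nat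
    \<Rightarrow> (nat \<Rightarrow> ('x, 'k) mpoly) set" where
  "diff_image X r M i = diff_apply r M i ` {v. vec_in X (r i) v}"

definition diff_kernel ::
  "'x set \<Rightarrow> (nat \<Rightarrow> nat) \<Rightarrow> (nat \<Rightarrow> nat \<Rightarrow> nat \<Rightarrow> ('x, 'k::comm_ring_1) mpoly) \<Rightarrow> nat
    \<Rightarrow> (nat \<Rightarrow> ('x, 'k) mpoly) set" where
  "diff_kernel X r M i = {v. vec_in X (r i) v \<and> diff_apply r M i v = (\<lambda>_. 0)}"

definition min_graded_free_res ::
  "'x set \<Rightarrow> ('x, 'k::comm_ring_1) mpoly set \<Rightarrow> (nat \<Rightarrow> nat) \<Rightarrow> (nat \<Rightarrow> nat \<Rightarrow> int)
    \<Rightarrow> (nat \<Rightarrow> nat \<Rightarrow> nat \<Rightarrow> ('x, 'k) mpoly) \<Rightarrow> bool" where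
  "min_graded_free_res X I r a M \<longleftrightarrow>
     \<comment> \<open>F_0 = R\<close>
     r 0 = 1 \<and> a 0 0 = 0 \<and>
     \<comment> \<open>entries lie in R, differentials are homogeneous of degree 0, and minimal
        (image of F_i lies in m F_(i-1), m the homogeneous maximal ideal)\<close>
     (\<forall>i\<ge>1. \<forall>k<r (i - 1). \<forall>j<r i.
        in_ring X (M i k j) \<and>
        (if a (i - 1) k \<le> a i j then homog (nat (a i j - a (i - 1) k)) (M i k j) else M i k j = 0) \<and>
        Poly_Mapping.lookup (M i k j) 0 = 0) \<and>
     \<comment> \<open>cokernel of F_1 \<rightarrow> F_0 = R is R/I\<close>
     diff_image X r M 1 = {v. vec_in X 1 v \<and> v 0 \<in> I} \<and>
     \<comment> \<open>exactness at F_i, i \<ge> 1\<close>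
     (\<forall>i\<ge>1. diff_kernel X r M i = diff_image X r M (i + 1))"

end

theory Submission
  imports Defs "HOL-Library.Function_Algebras" "HOL.Vector_Spaces"
begin

definition monom :: "('x \<Rightarrow>\<^sub>0 nat) \<Rightarrow> ('x, 'k::comm_ring_1) mpoly" where
  "monom m = Poly_Mapping.single m 1"

definition var_exp :: "'x \<Rightarrow> 'x \<Rightarrow>\<^sub>0 nat" where
  "var_exp x = Poly_Mapping.single x 1"

definition const_poly :: "'k \<Rightarrow> ('x, 'k::comm_ring_1) mpoly" where
  "const_poly c = Poly_Mapping.single 0 c"

lemma single_eq_single_iff:
  "(c::'a::zero) \<noteq> 0 \<Longrightarrow> Poly_Mapping.single k c = Poly_Mapping.single l c \<longleftrightarrow> k = l"
  by (metis lookup_single_eq lookup_single_not_eq)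

lemma monom_eq_iff [simp]: "monom m = (monom m' :: ('x, 'k::comm_ring_1) mpoly) \<longleftrightarrow> m = m'"
  by (simp add: monom_def single_eq_single_iff)

lemma inj_monom: "inj monom"
  by (rule injI) simp

lemma monom_add: "monom (m + n) = monom m * monom n"
  by (simp add: monom_def mult_single)

lemma var_eq_monom: "var x = monom (var_exp x)"
  by (simp add: var_def monom_def var_exp_def)

lemma keys_var_exp [simp]: "Poly_Mapping.keys (var_exp x) = {x}"
  by (simp add: var_exp_def)

lemma var_exp_eq_iff [simp]: "var_exp x = var_exp y \<longleftrightarrow> x = y"
  by (simp add: var_exp_def single_eq_single_iff)

lemma lookup_monom: "Poly_Mapping.lookup (monom m) n = of_bool (m = n)"
  by (simp add: monom_def lookup_single when_def)

lemma lookup_const_poly_mult: "Poly_Mapping.lookup (const_poly c * p) m = c * Poly_Mapping.lookup p m"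
  unfolding const_poly_def mult_map_scale_conv_mult[symmetric]
  by (simp add: Poly_Mapping.map.rep_eq when_def)

lemma const_poly_mult: "const_poly (c * d) = (const_poly c * const_poly d :: ('x, 'k::comm_ring_1) mpoly)"
  by (simp add: const_poly_def mult_single)

lemma const_poly_add: "const_poly (c + d) = (const_poly c + const_poly d :: ('x, 'k::comm_ring_1) mpoly)"
  by (simp add: const_poly_def single_add)

lemma const_poly_0 [simp]: "const_poly 0 = 0"
  and const_poly_1 [simp]: "const_poly 1 = 1"
  by (simp_all add: const_poly_def)

lemma lookup_const_poly_0 [simp]: "Poly_Mapping.lookup (const_poly c) 0 = c"
  by (simp add: const_poly_def)

lemma mon_deg_add [simp]: "mon_deg (m + n) = mon_deg m + mon_deg n"
  unfolding mon_deg_def by (rule setsum_keys_plus_distrib) (simp_all add: lookup_add)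

lemma mon_deg_single [simp]: "mon_deg (Poly_Mapping.single x k) = k"
  unfolding mon_deg_def by (cases "k = 0") auto

lemma mon_deg_var_exp [simp]: "mon_deg (var_exp x) = 1"
  by (simp add: var_exp_def)

lemma mon_deg_0 [simp]: "mon_deg 0 = 0"
  unfolding mon_deg_def by simp

lemma mon_deg_eq_0_iff: "mon_deg m = 0 \<longleftrightarrow> m = 0"
  unfolding mon_deg_def by (auto simp: in_keys_iff poly_mapping_eq_iff fun_eq_iff)

lemma mon_deg_eq_1_iff: "mon_deg m = 1 \<longleftrightarrow> (\<exists>x. m = var_exp x)"
proof
  assume deg: "mon_deg m = 1"
  then obtain x where x: "x \<in> Poly_Mapping.keys m"
    by (metis mon_deg_0 mon_deg_eq_0_iff zero_neq_one equals0I keys_eq_empty)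
  have "1 = Poly_Mapping.lookup m x + sum (Poly_Mapping.lookup m) (Poly_Mapping.keys m - {x})"
    using deg x unfolding mon_deg_def by (simp add: sum.remove)
  moreover have "Poly_Mapping.lookup m x \<noteq> 0" using x by (simp add: in_keys_iff)
  ultimately have "Poly_Mapping.lookup m x = 1" and "sum (Poly_Mapping.lookup m) (Poly_Mapping.keys m - {x}) = 0"
    by linarith+
  then have "m = var_exp x"
    by (intro poly_mapping_eqI) (auto simp: var_exp_def lookup_single when_def in_keys_iff)
  then show "\<exists>x. m = var_exp x" ..
qed auto

subsection \<open>Homogeneous components\<close>

definition homog_part :: "nat \<Rightarrow> ('x, 'k::comm_ring_1) mpoly \<Rightarrow> ('x, 'k) mpoly" where
  "homog_part d p = Abs_poly_mapping (\<lambda>m. if mon_deg m = d then Poly_Mapping.lookup p m else 0)"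

lemma lookup_homog_part:
  "Poly_Mapping.lookup (homog_part d p) m = (if mon_deg m = d then Poly_Mapping.lookup p m else 0)"
proof -
  have "finite {m. (if mon_deg m = d then Poly_Mapping.lookup p m else 0) \<noteq> 0}"
    by (rule finite_subset[of _ "Poly_Mapping.keys p"]) (auto simp: in_keys_iff)
  then show ?thesis unfolding homog_part_def by simp
qed

lemma homog_part_add: "homog_part d (p + q) = homog_part d p + homog_part d q"
  by (rule poly_mapping_eqI) (simp add: lookup_homog_part lookup_add)

lemma homog_part_0 [simp]: "homog_part d 0 = 0"
  by (rule poly_mapping_eqI) (simp add: lookup_homog_part)

lemma homog_part_sum: "homog_part d (sum f A) = (\<Sum>i\<in>A. homog_part d (f i))"
  by (induction A rule: infinite_finite_induct) (auto simp: homog_part_add)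

lemma homog_part_eq_0: "d \<notin> mon_deg ` Poly_Mapping.keys p \<Longrightarrow> homog_part d p = 0"
  by (rule poly_mapping_eqI) (force simp: lookup_homog_part in_keys_iff)

lemma homog_part_0_eq_const: "homog_part 0 p = const_poly (Poly_Mapping.lookup p 0)"
  by (rule poly_mapping_eqI)
     (auto simp: lookup_homog_part const_poly_def lookup_single when_def mon_deg_eq_0_iff)

lemma lookup_homog_part_0: "0 < d \<Longrightarrow> Poly_Mapping.lookup (homog_part d p) 0 = 0"
  by (simp add: lookup_homog_part)

lemma homog_homog_part: "homog d (homog_part d p)"
  unfolding homog_def by (auto simp: in_keys_iff lookup_homog_part split: if_splits)

lemma homog_iff_homog_part: "homog d p \<longleftrightarrow> homog_part d p = p"
  unfolding homog_def by (auto simp: poly_mapping_eq_iff fun_eq_iff lookup_homog_part in_keys_iff)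

lemma homog_part_homog: "homog e p \<Longrightarrow> homog_part d p = (if d = e then p else 0)"
  unfolding homog_def by (auto simp: poly_mapping_eq_iff fun_eq_iff lookup_homog_part in_keys_iff)

lemma homog_part_decomp: "p = (\<Sum>d\<in>mon_deg ` Poly_Mapping.keys p. homog_part d p)"
proof (rule poly_mapping_eqI)
  fix m
  have "Poly_Mapping.lookup (\<Sum>d\<in>mon_deg ` Poly_Mapping.keys p. homog_part d p) m
      = (\<Sum>d\<in>mon_deg ` Poly_Mapping.keys p. if mon_deg m = d then Poly_Mapping.lookup p m else 0)"
    by (simp add: lookup_sum lookup_homog_part)
  also have "\<dots> = Poly_Mapping.lookup p m"
    by (cases "m \<in> Poly_Mapping.keys p") (auto simp: in_keys_iff)
  finally show "Poly_Mapping.lookup p m = Poly_Mapping.lookup (\<Sum>d\<in>mon_deg ` Poly_Mapping.keys p. homog_part d p) m"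
    by simp
qed

lemma homog_0 [simp]: "homog d 0"
  unfolding homog_def by simp

lemma homog_add: "homog d p \<Longrightarrow> homog d q \<Longrightarrow> homog d (p + q)"
  unfolding homog_def using keys_add[of p q] by blast

lemma homog_mult: "homog d p \<Longrightarrow> homog e q \<Longrightarrow> homog (d + e) (p * q)"
  unfolding homog_def using keys_mult[of p q] by fastforce

lemma homog_const_poly_mult: "homog d p \<Longrightarrow> homog d (const_poly c * p)"
  unfolding homog_def by (auto simp: in_keys_iff lookup_const_poly_mult)

lemma homog_monom: "homog (mon_deg m) (monom m)"
  unfolding homog_def monom_def by simp

lemma homog_var: "homog 1 (var x)"
  using homog_monom[of "var_exp x"] by (simp add: var_eq_monom)

lemma homog_part_mult_homog:
  assumes "homog e q"
  shows "homog_part d (q * p) = (if e \<le> d then q * homog_part (d - e) p else 0)"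
proof -
  let ?D = "mon_deg ` Poly_Mapping.keys p"
  have "q * p = (\<Sum>n\<in>?D. q * homog_part n p)"
    by (subst homog_part_decomp[of p]) (simp add: sum_distrib_left)
  then have "homog_part d (q * p) = (\<Sum>n\<in>?D. homog_part d (q * homog_part n p))"
    by (simp add: homog_part_sum)
  also have "\<dots> = (\<Sum>n\<in>?D. if e \<le> d \<and> n = d - e then q * homog_part n p else 0)"
  proof (rule sum.cong[OF refl])
    fix n
    have "homog (e + n) (q * homog_part n p)" by (rule homog_mult[OF assms homog_homog_part])
    then show "homog_part d (q * homog_part n p) = (if e \<le> d \<and> n = d - e then q * homog_part n p else 0)"
      by (auto simp: homog_part_homog)
  qed
  also have "\<dots> = (if e \<le> d then q * homog_part (d - e) p else 0)"
  proof (cases "d - e \<in> ?D")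
    case False
    then have "homog_part (d - e) p = 0" by (rule homog_part_eq_0)
    then show ?thesis by (simp add: sum.delta)
  qed (simp add: sum.delta)
  finally show ?thesis .
qed

lemma homog_part_0_mult: "homog_part 0 (p * q) = homog_part 0 p * homog_part 0 q"
proof -
  let ?D = "mon_deg ` Poly_Mapping.keys p"
  have "p * q = (\<Sum>d\<in>?D. homog_part d p * q)"
    by (subst homog_part_decomp[of p]) (simp add: sum_distrib_right)
  then have "homog_part 0 (p * q) = (\<Sum>d\<in>?D. homog_part 0 (homog_part d p * q))"
    by (simp add: homog_part_sum)
  also have "\<dots> = (\<Sum>d\<in>?D. if d = 0 then homog_part 0 p * homog_part 0 q else 0)"
    by (intro sum.cong refl) (simp add: homog_part_mult_homog[OF homog_homog_part])
  also have "\<dots> = homog_part 0 p * homog_part 0 q"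
  proof (cases "0 \<in> ?D")
    case False
    then have "homog_part 0 p = 0" by (rule homog_part_eq_0)
    then show ?thesis by (simp add: sum.delta)
  qed (simp add: sum.delta)
  finally show ?thesis .
qed

lemma lookup_mult_0:
  "Poly_Mapping.lookup (p * q :: ('x, 'k::comm_ring_1) mpoly) 0 = Poly_Mapping.lookup p 0 * Poly_Mapping.lookup q 0"
  using arg_cong[OF homog_part_0_mult[of p q], of "\<lambda>p. Poly_Mapping.lookup p 0"]
  by (simp add: homog_part_0_eq_const flip: const_poly_mult)

lemma homog_0_eq_0:
  assumes "homog 0 (p :: ('x, 'k::comm_ring_1) mpoly)" and "Poly_Mapping.lookup p 0 = 0"
  shows "p = 0"
proof -
  have "p = homog_part 0 p" using assms(1) by (simp add: homog_iff_homog_part)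
  also have "\<dots> = 0" using assms(2) by (simp add: homog_part_0_eq_const)
  finally show ?thesis .
qed

lemma in_ring_0 [simp]: "in_ring X 0"
  and in_ring_1 [simp]: "in_ring X 1"
  and in_ring_const_poly [simp]: "in_ring X (const_poly c)"
  by (simp_all add: in_ring_def const_poly_def)

lemma in_ring_add: "in_ring X p \<Longrightarrow> in_ring X q \<Longrightarrow> in_ring X (p + q)"
  unfolding in_ring_def using keys_add[of p q] by blast

lemma in_ring_uminus: "in_ring X (p :: ('x, 'k::ab_group_add) mpoly) \<Longrightarrow> in_ring X (- p)"
  unfolding in_ring_def by simp

lemma in_ring_diff: "in_ring X p \<Longrightarrow> in_ring X (q :: ('x, 'k::ab_group_add) mpoly) \<Longrightarrow> in_ring X (p - q)"
  using in_ring_add[of X p "- q"] in_ring_uminus[of X q] by simp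

lemma in_ring_sum: "(\<And>i. i \<in> A \<Longrightarrow> in_ring X (f i)) \<Longrightarrow> in_ring X (sum f A)"
  by (induction A rule: infinite_finite_induct) (auto intro: in_ring_add)

lemma in_ring_mult:
  assumes "in_ring X p" "in_ring X q"
  shows "in_ring X (p * q)"
  unfolding in_ring_def
proof
  fix m assume "m \<in> Poly_Mapping.keys (p * q)"
  then obtain m1 m2 where "m = m1 + m2" "m1 \<in> Poly_Mapping.keys p" "m2 \<in> Poly_Mapping.keys q"
    using keys_mult[of p q] by blast
  then show "Poly_Mapping.keys m \<subseteq> X"
    using assms keys_add[of m1 m2] unfolding in_ring_def by blast
qed

lemma in_ring_homog_part: "in_ring X p \<Longrightarrow> in_ring X (homog_part d p)"
  unfolding in_ring_def by (auto simp: in_keys_iff lookup_homog_part split: if_splits)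

lemma in_ring_monom: "Poly_Mapping.keys m \<subseteq> X \<Longrightarrow> in_ring X (monom m)"
  unfolding in_ring_def monom_def by simp

lemma in_ring_var: "x \<in> X \<Longrightarrow> in_ring X (var x)"
  unfolding in_ring_def var_def by simp

subsection \<open>Linear algebra\<close>

context vector_space
begin

lemma independent_family:
  assumes "finite J" and trivial: "\<And>c. (\<Sum>j\<in>J. c j *s u j) = 0 \<Longrightarrow> \<forall>j\<in>J. c j = 0"
  shows "inj_on u J" and "independent (u ` J)"
proof -
  show inj: "inj_on u J"
  proof (rule inj_onI, rule ccontr)
    fix i j assume ij: "i \<in> J" "j \<in> J" "u i = u j" "i \<noteq> j"
    define c where "c k = (if k = i then 1 else if k = j then -1 else (0::'a))" for k
    have "(\<Sum>k\<in>J. c k *s u k) = (\<Sum>k\<in>J. (if k = i then u i else 0) + (if k = j then - u j else 0))"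
      by (rule sum.cong) (auto simp: c_def ij(4))
    also have "\<dots> = 0" using ij \<open>finite J\<close> by (simp add: sum.distrib)
    finally have "c i = 0" using trivial ij(1) by blast
    then show False by (simp add: c_def)
  qed
  show "independent (u ` J)"
  proof (rule independent_if_scalars_zero)
    show "finite (u ` J)" using \<open>finite J\<close> by simp
    fix f x assume "(\<Sum>x\<in>u ` J. f x *s x) = 0" and "x \<in> u ` J"
    then show "f x = 0" using trivial[of "f \<circ> u"] by (auto simp: sum.reindex[OF inj])
  qed
qed

lemma dim_eq_card_family:
  assumes "finite J" and "\<And>c. (\<Sum>j\<in>J. c j *s u j) = 0 \<Longrightarrow> \<forall>j\<in>J. c j = 0"
    and "u ` J \<subseteq> V" and "V \<subseteq> span (u ` J)"
  shows "dim V = card J"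
  using basis_card_eq_dim[OF assms(3,4) independent_family(2)[OF assms(1,2)]]
    card_image[OF independent_family(1)[OF assms(1,2)]] by simp

lemma span_Int_span_eq_0:
  assumes "independent B" "finite B" and "S \<subseteq> B" "T \<subseteq> B" "S \<inter> T = {}"
    and "z \<in> span S" "z \<in> span T"
  shows "z = 0"
proof -
  have fin: "finite S" "finite T" using assms(2-4) finite_subset by blast+
  obtain u where u: "z = (\<Sum>v\<in>S. u v *s v)" using assms(6) span_finite[OF fin(1)] by auto
  obtain w where w: "z = (\<Sum>v\<in>T. w v *s v)" using assms(7) span_finite[OF fin(2)] by auto
  define c where "c v = (if v \<in> S then u v else if v \<in> T then - w v else 0)" for v
  have "(\<Sum>v\<in>B. c v *s v) = (\<Sum>v\<in>S \<union> T. c v *s v)"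
    using assms(2-4) by (intro sum.mono_neutral_right) (auto simp: c_def)
  also have "\<dots> = (\<Sum>v\<in>S. c v *s v) + (\<Sum>v\<in>T. c v *s v)"
    using fin assms(5) by (simp add: sum.union_disjoint)
  also have "(\<Sum>v\<in>S. c v *s v) = z" unfolding u by (rule sum.cong) (auto simp: c_def)
  also have "(\<Sum>v\<in>T. c v *s v) = - z" unfolding w using assms(5)
    by (auto simp: c_def sum_negf[symmetric] intro!: sum.cong)
  finally have "\<forall>v\<in>B. c v = 0" using independentD[OF assms(1,2) subset_refl] by simp
  then have "\<forall>v\<in>S. u v = 0" using assms(3) unfolding c_def by (metis subsetD)
  then show "z = 0" unfolding u by simp
qed

end

context vector_space_pair
begin

text \<open>Rank-nullity for a linear map restricted to a finite-dimensional subspace \<open>W\<close> of a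
  possibly infinite-dimensional space.\<close>

lemma dim_kernel_plus_dim_image:
  assumes f: "Vector_Spaces.linear s1 s2 f" and W: "vs1.subspace W" "finite T" "W \<subseteq> vs1.span T"
  shows "vs1.dim W = vs1.dim {x\<in>W. f x = 0} + vs2.dim (f ` W)"
proof -
  let ?K = "{x\<in>W. f x = 0}"
  obtain B0 where B0: "B0 \<subseteq> ?K" "vs1.independent B0" "?K \<subseteq> vs1.span B0" "card B0 = vs1.dim ?K"
    by (rule vs1.basis_exists)
  obtain B where B: "B0 \<subseteq> B" "B \<subseteq> W" "vs1.independent B" "W \<subseteq> vs1.span B"
    using B0(1,2) vs1.maximal_independent_subset_extend[of B0 W] by blast
  have finB: "finite B" using vs1.independent_span_bound[OF W(2) B(3)] B(2) W(3) by blast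
  define C where "C = B - B0"
  have finC: "finite C" using finB by (simp add: C_def)
  have trivial: "\<forall>c\<in>C. a c = 0" if "(\<Sum>c\<in>C. s2 (a c) (f c)) = 0" for a
  proof -
    let ?x = "\<Sum>c\<in>C. s1 (a c) c"
    have "f ?x = 0" using that by (simp add: linear_sum[OF f] linear_scale[OF f])
    moreover have "?x \<in> W" using B(2) W(1) unfolding C_def
      by (intro vs1.subspace_sum vs1.subspace_scale) auto
    ultimately have "?x \<in> vs1.span B0" using B0(3) by blast
    moreover have "?x \<in> vs1.span C" by (intro vs1.span_sum vs1.span_scale vs1.span_base)
    ultimately have "?x = 0"
      using vs1.span_Int_span_eq_0[OF B(3) finB B(1), of C ?x] by (auto simp: C_def)
    then show ?thesis using vs1.independentD[OF vs1.independent_mono[OF B(3)] finC subset_refl]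
      by (auto simp: C_def)
  qed
  have span: "f ` W \<subseteq> vs2.span (f ` C)"
  proof
    fix y assume "y \<in> f ` W"
    then obtain x where x: "x \<in> W" "y = f x" by blast
    then obtain u where u: "x = (\<Sum>v\<in>B. s1 (u v) v)"
      using B(4) vs1.span_finite[OF finB] by blast
    have "y = (\<Sum>v\<in>B. s2 (u v) (f v))" using x u by (simp add: linear_sum[OF f] linear_scale[OF f])
    also have "\<dots> = (\<Sum>v\<in>C. s2 (u v) (f v))"
      using B0(1) finB by (intro sum.mono_neutral_right) (auto simp: C_def)
    also have "\<dots> \<in> vs2.span (f ` C)" by (intro vs2.span_sum vs2.span_scale vs2.span_base) auto
    finally show "y \<in> vs2.span (f ` C)" .
  qed
  have "f ` C \<subseteq> f ` W" using B(2) by (auto simp: C_def)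
  then have "vs2.dim (f ` W) = card C"
    using vs2.dim_eq_card_family[where u = f, OF finC trivial _ span] by blast
  moreover have "vs1.dim W = card B" using vs1.basis_card_eq_dim[OF B(2,4,3)] by simp
  moreover have "card B0 \<le> card B" using B(1) finB by (rule card_mono[rotated])
  ultimately show ?thesis
    using B0(4) B(1) finB by (simp add: C_def card_Diff_subset finite_subset)
qed

end

subsection \<open>Polynomials and vectors of polynomials as vector spaces over the constants\<close>

definition poly_scale :: "'k::field \<Rightarrow> ('x, 'k) mpoly \<Rightarrow> ('x, 'k) mpoly" where
  "poly_scale c p = const_poly c * p"

definition vec_scale :: "'k::field \<Rightarrow> (nat \<Rightarrow> ('x, 'k) mpoly) \<Rightarrow> (nat \<Rightarrow> ('x, 'k) mpoly)" where
  "vec_scale c v = (\<lambda>k. const_poly c * v k)"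

interpretation polys: vector_space "poly_scale :: 'k::field \<Rightarrow> ('x, 'k) mpoly \<Rightarrow> _"
  by unfold_locales (simp_all add: poly_scale_def const_poly_add const_poly_mult algebra_simps)

interpretation vecs: vector_space "vec_scale :: 'k::field \<Rightarrow> (nat \<Rightarrow> ('x, 'k) mpoly) \<Rightarrow> _"
  by unfold_locales (simp_all add: vec_scale_def const_poly_add const_poly_mult algebra_simps fun_eq_iff)

interpretation vecs_polys: vector_space_pair
  "vec_scale :: 'k::field \<Rightarrow> (nat \<Rightarrow> ('x, 'k) mpoly) \<Rightarrow> _" "poly_scale :: 'k::field \<Rightarrow> ('x, 'k) mpoly \<Rightarrow> _"
  by unfold_locales

lemma vec_scale_apply: "(\<Sum>i\<in>A. vec_scale (c i) (v i)) k = (\<Sum>i\<in>A. const_poly (c i) * v i k)"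
  by (induction A rule: infinite_finite_induct) (simp_all add: vec_scale_def)

lemma independent_monoms: "finite S \<Longrightarrow> polys.independent (monom ` S :: ('x, 'k::field) mpoly set)"
proof (rule polys.independent_family(2))
  fix c :: "('x \<Rightarrow>\<^sub>0 nat) \<Rightarrow> 'k" assume "finite S" "(\<Sum>m\<in>S. poly_scale (c m) (monom m)) = 0"
  then have "Poly_Mapping.lookup (\<Sum>m\<in>S. poly_scale (c m) (monom m)) n = 0" for n
    by simp
  then have coeff: "(\<Sum>m\<in>S. c m * of_bool (m = n)) = 0" for n
    by (simp add: lookup_sum poly_scale_def lookup_const_poly_mult lookup_monom)
  show "\<forall>m\<in>S. c m = 0"
  proof
    fix n assume "n \<in> S"
    then have "S \<inter> {m. m = n} = {n}" by auto
    then show "c n = 0" using coeff[of n] \<open>finite S\<close> by simp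
  qed
qed

lemma span_mult:
  assumes "p \<in> polys.span A" and q: "q \<in> polys.span B"
  shows "p * q \<in> polys.span {a * b | a b. a \<in> A \<and> b \<in> B}"
  using assms(1)
proof (induction rule: polys.span_induct_alt)
  case (step c a p)
  have "a * q \<in> polys.span {a * b | a b. a \<in> A \<and> b \<in> B}"
    using q
  proof (induction rule: polys.span_induct_alt)
    case (step c' b q')
    have "a * b \<in> polys.span {a * b | a b. a \<in> A \<and> b \<in> B}"
      using \<open>a \<in> A\<close> \<open>b \<in> B\<close> by (intro polys.span_base) blast
    moreover have "a * (poly_scale c' b + q') = poly_scale c' (a * b) + a * q'"
      by (simp add: poly_scale_def algebra_simps)
    ultimately show ?case using step(2) by (simp add: polys.span_add polys.span_scale)
  qed (simp add: polys.span_zero)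
  moreover have "(poly_scale c a + p) * q = poly_scale c (a * q) + p * q"
    by (simp add: poly_scale_def algebra_simps)
  ultimately show ?case using step(2) by (simp add: polys.span_add polys.span_scale)
qed (simp add: polys.span_zero)

lemma linear_form_expansion:
  assumes "homog 1 p" "in_ring X p" "finite X"
  shows "p = (\<Sum>x\<in>X. poly_scale (Poly_Mapping.lookup p (var_exp x)) (var x))"
proof (rule poly_mapping_eqI)
  fix m
  have "Poly_Mapping.lookup (\<Sum>x\<in>X. poly_scale (Poly_Mapping.lookup p (var_exp x)) (var x)) m
      = (\<Sum>x\<in>X. of_bool (var_exp x = m) * Poly_Mapping.lookup p m)"
    unfolding lookup_sum by (intro sum.cong refl)
      (auto simp: poly_scale_def lookup_const_poly_mult var_eq_monom lookup_monom)
  also have "\<dots> = Poly_Mapping.lookup p m"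
  proof (cases "m \<in> Poly_Mapping.keys p")
    case True
    then have "mon_deg m = 1" using assms(1) unfolding homog_def by blast
    then obtain y where y: "m = var_exp y" unfolding mon_deg_eq_1_iff ..
    then have "y \<in> X" using True assms(2) unfolding in_ring_def by auto
    then show ?thesis using y assms(3) by (simp add: single_eq_single_iff)
  qed (simp add: in_keys_iff)
  finally show "Poly_Mapping.lookup p m
      = Poly_Mapping.lookup (\<Sum>x\<in>X. poly_scale (Poly_Mapping.lookup p (var_exp x)) (var x)) m"
    by simp
qed

definition var_multiples :: "'x set \<Rightarrow> ('x \<Rightarrow>\<^sub>0 nat) set \<Rightarrow> ('x \<Rightarrow>\<^sub>0 nat) set" where
  "var_multiples X Q = {var_exp x + m | x m. x \<in> X \<and> m \<in> Q}"

lemma finite_var_multiples: "finite X \<Longrightarrow> finite Q \<Longrightarrow> finite (var_multiples X Q)"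
proof -
  assume "finite X" "finite Q"
  moreover have "var_multiples X Q = (\<lambda>(x, m). var_exp x + m) ` (X \<times> Q)"
    by (auto simp: var_multiples_def)
  ultimately show ?thesis by simp
qed

definition unit_vec :: "nat \<Rightarrow> nat \<Rightarrow> ('x, 'k::comm_ring_1) mpoly" where
  "unit_vec j = (\<lambda>l. if l = j then 1 else 0)"

lemma vec_in_unit_vec: "j < n \<Longrightarrow> vec_in X n (unit_vec j)"
  unfolding vec_in_def unit_vec_def by auto

locale quadratic_monomial_resolution =
  fixes X :: "'x set" and Q :: "('x \<Rightarrow>\<^sub>0 nat) set"
    and r :: "nat \<Rightarrow> nat" and a :: "nat \<Rightarrow> nat \<Rightarrow> int"
    and M :: "nat \<Rightarrow> nat \<Rightarrow> nat \<Rightarrow> ('x, 'k::field) mpoly"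
  assumes finite_vars: "finite X" and finite_Q: "finite Q"
    and quadratic: "m \<in> Q \<Longrightarrow> mon_deg m = 2"
    and Q_vars: "m \<in> Q \<Longrightarrow> Poly_Mapping.keys m \<subseteq> X"
    and resolution: "min_graded_free_res X (ideal_gen X (monom ` Q)) r a M"
begin

abbreviation G :: "('x, 'k) mpoly set" where
  "G \<equiv> monom ` Q"

abbreviation I :: "('x, 'k) mpoly set" where
  "I \<equiv> ideal_gen X G"

abbreviation gen :: "nat \<Rightarrow> ('x, 'k) mpoly" where
  "gen j \<equiv> M 1 0 j"

definition d1 :: "(nat \<Rightarrow> ('x, 'k) mpoly) \<Rightarrow> ('x, 'k) mpoly" where
  "d1 v = (\<Sum>j<r 1. gen j * v j)"

lemma rank_0: "r 0 = 1" and shift_0: "a 0 0 = 0"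
  using resolution unfolding min_graded_free_res_def by auto

lemma entry_props:
  assumes "1 \<le> i" "k < r (i - 1)" "j < r i"
  shows "in_ring X (M i k j)"
    and "if a (i - 1) k \<le> a i j then homog (nat (a i j - a (i - 1) k)) (M i k j) else M i k j = 0"
    and "Poly_Mapping.lookup (M i k j) 0 = 0"
  using resolution assms unfolding min_graded_free_res_def by blast+

lemma image_diff_1: "diff_image X r M 1 = {v. vec_in X 1 v \<and> v 0 \<in> I}"
  using resolution unfolding min_graded_free_res_def by blast

lemma exact: "1 \<le> i \<Longrightarrow> diff_kernel X r M i = diff_image X r M (i + 1)"
  using resolution unfolding min_graded_free_res_def by blast

lemma diff_apply_1: "diff_apply r M 1 v = (\<lambda>k. if k = 0 then d1 v else 0)"
  by (auto simp: fun_eq_iff diff_apply_def d1_def rank_0)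

lemma diff_apply_1_eq_0_iff: "diff_apply r M 1 v = (\<lambda>_. 0) \<longleftrightarrow> d1 v = 0"
  unfolding diff_apply_1 fun_eq_iff by (auto dest: spec[of _ 0])

lemma diff_apply_unit_vec:
  "j < r i \<Longrightarrow> diff_apply r M i (unit_vec j) = (\<lambda>k. if k < r (i - 1) then M i k j else 0)"
  unfolding diff_apply_def unit_vec_def by (auto simp: fun_eq_iff if_distrib cong: if_cong)

text \<open>Minimality: the differentials have no constant entries, so by exactness every syzygy has
  coefficients without constant term.\<close>

lemma kernel_constant_term:
  assumes "1 \<le> i" "vec_in X (r i) v" "diff_apply r M i v = (\<lambda>_. 0)" "j < r i"
  shows "Poly_Mapping.lookup (v j) 0 = 0"
proof -
  have "v \<in> diff_image X r M (i + 1)"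
    using assms(2,3) exact[OF assms(1)] unfolding diff_kernel_def by blast
  then obtain w where "v = diff_apply r M (i + 1) w" unfolding diff_image_def by auto
  then have "v j = (\<Sum>l<r (i + 1). M (i + 1) j l * w l)" using assms(4) by (simp add: diff_apply_def)
  then show ?thesis
    using entry_props(3)[of "i + 1" j] assms(4) by (simp add: lookup_sum lookup_mult_0)
qed

lemma gen_in_ideal:
  assumes "j < r 1"
  shows "gen j \<in> I"
proof -
  have "diff_apply r M 1 (unit_vec j) \<in> diff_image X r M 1"
    using vec_in_unit_vec[OF assms] unfolding diff_image_def by blast
  then show ?thesis using assms unfolding image_diff_1 by (simp add: diff_apply_unit_vec rank_0)
qed

lemma gen_nonzero: "j < r 1 \<Longrightarrow> gen j \<noteq> 0"
proof
  assume j: "j < r 1" and "gen j = 0"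
  then have "diff_apply r M 1 (unit_vec j) = (\<lambda>_. 0)"
    by (auto simp: diff_apply_unit_vec rank_0 fun_eq_iff)
  then have "Poly_Mapping.lookup (unit_vec j j :: ('x, 'k) mpoly) 0 = 0"
    using kernel_constant_term[of 1 "unit_vec j" j] vec_in_unit_vec[OF j, of X] j by simp
  then show False by (simp add: unit_vec_def)
qed

lemma homog_monom_Q: "m \<in> Q \<Longrightarrow> homog 2 (monom m :: ('x, 'k) mpoly)"
  using homog_monom[of m] quadratic by simp

lemma monom_Q_in_ideal: "m \<in> Q \<Longrightarrow> monom m \<in> I"
  unfolding ideal_gen_def by (intro CollectI exI[of _ "{monom m}"] exI[of _ "\<lambda>_. 1"]) auto

lemma homog_part_ideal:
  assumes "p \<in> I"
  shows "\<exists>F c. finite F \<and> F \<subseteq> G \<and> (\<forall>s\<in>F. in_ring X (c s)) \<and>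
    (\<forall>d. homog_part d p = (if 2 \<le> d then (\<Sum>s\<in>F. homog_part (d - 2) (c s) * s) else 0))"
proof -
  obtain F c where F: "finite F" "F \<subseteq> G" "\<forall>s\<in>F. in_ring X (c s)"
    and p: "p = (\<Sum>s\<in>F. c s * s)"
    using assms unfolding ideal_gen_def by blast
  have hp: "homog_part d p = (if 2 \<le> d then (\<Sum>s\<in>F. homog_part (d - 2) (c s) * s) else 0)" for d
  proof -
    have "homog_part d p = (\<Sum>s\<in>F. homog_part d (s * c s))"
      unfolding p by (simp add: homog_part_sum mult.commute)
    also have "\<dots> = (\<Sum>s\<in>F. if 2 \<le> d then s * homog_part (d - 2) (c s) else 0)"
    proof (rule sum.cong[OF refl])
      fix s assume "s \<in> F"
        then have "homog 2 s" using F(2) homog_monom_Q by blast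
      then show "homog_part d (s * c s) = (if 2 \<le> d then s * homog_part (d - 2) (c s) else 0)"
        by (rule homog_part_mult_homog)
    qed
    finally show ?thesis by (simp add: mult.commute)
  qed
  with F show ?thesis by blast
qed

lemma homog_gen: "j < r 1 \<Longrightarrow> homog (nat (a 1 j)) (gen j)"
  and shift_1_ge_2: "j < r 1 \<Longrightarrow> 2 \<le> a 1 j"
proof -
  assume j: "j < r 1"
  have "if 0 \<le> a 1 j then homog (nat (a 1 j)) (gen j) else gen j = 0"
    using entry_props(2)[of 1 0 j] j by (simp add: rank_0 shift_0 cong: if_cong)
  then have "0 \<le> a 1 j" and h: "homog (nat (a 1 j)) (gen j)"
    using gen_nonzero[OF j] by (auto split: if_splits)
  then show "homog (nat (a 1 j)) (gen j)" by simp
  show "2 \<le> a 1 j"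
  proof (rule ccontr)
    assume "\<not> 2 \<le> a 1 j"
    obtain F c where "\<forall>d. homog_part d (gen j) = (if 2 \<le> d then (\<Sum>s\<in>F. homog_part (d - 2) (c s) * s) else 0)"
      using homog_part_ideal[OF gen_in_ideal[OF j]] by blast
    with \<open>\<not> 2 \<le> a 1 j\<close> have "homog_part (nat (a 1 j)) (gen j) = 0" by simp
    then show False using h gen_nonzero[OF j] by (simp add: homog_iff_homog_part)
  qed
qed

lemma gen_combination:
  assumes "s \<in> G"
  shows "\<exists>\<beta>. s = (\<Sum>k<r 1. poly_scale (\<beta> k) (gen k))"
proof -
  obtain m where m: "m \<in> Q" "s = monom m" using assms by blast
  let ?v = "\<lambda>k::nat. if k = 0 then s else 0"
  have "?v \<in> diff_image X r M 1" unfolding image_diff_1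
    using monom_Q_in_ideal[OF m(1)] in_ring_monom[OF Q_vars[OF m(1)]] m(2) by (auto simp: vec_in_def)
  then obtain w where w: "diff_apply r M 1 w = ?v" unfolding diff_image_def by auto
  have mw: "s = (\<Sum>k<r 1. gen k * w k)"
    using fun_cong[OF w, of 0] unfolding diff_apply_1 d1_def by simp
  define \<beta> where "\<beta> k = (if a 1 k = 2 then Poly_Mapping.lookup (w k) 0 else 0)" for k
  have "s = homog_part 2 s"
    using homog_monom_Q[OF m(1)] m(2) by (simp add: homog_iff_homog_part)
  also have "\<dots> = (\<Sum>k<r 1. homog_part 2 (gen k * w k))" by (subst mw) (simp add: homog_part_sum)
  also have "\<dots> = (\<Sum>k<r 1. poly_scale (\<beta> k) (gen k))"
  proof (rule sum.cong[OF refl])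
    fix k assume "k \<in> {..<r 1}"
    then have k: "k < r 1" by simp
    have "nat (a 1 k) \<le> 2 \<longleftrightarrow> a 1 k = 2" using shift_1_ge_2[OF k] by auto
    moreover have "homog_part 2 (gen k * w k)
        = (if nat (a 1 k) \<le> 2 then gen k * homog_part (2 - nat (a 1 k)) (w k) else 0)"
      by (rule homog_part_mult_homog[OF homog_gen[OF k]])
    ultimately show "homog_part 2 (gen k * w k) = poly_scale (\<beta> k) (gen k)"
      by (simp add: \<beta>_def poly_scale_def homog_part_0_eq_const mult.commute[of "gen k"])
  qed
  finally show ?thesis by (rule exI[of _ \<beta>])
qed

lemma shift_1: assumes j: "j < r 1" shows "a 1 j = 2"
proof (rule ccontr)
  assume "a 1 j \<noteq> 2"
  define D where "D = nat (a 1 j)"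
  have D: "3 \<le> D" using shift_1_ge_2[OF j] \<open>a 1 j \<noteq> 2\<close> unfolding D_def by linarith
  have hD: "homog D (gen j)" using homog_gen[OF j] unfolding D_def .
  obtain F c where F: "finite F" "F \<subseteq> G" "\<forall>s\<in>F. in_ring X (c s)"
    and hp: "\<forall>d. homog_part d (gen j) = (if 2 \<le> d then (\<Sum>s\<in>F. homog_part (d - 2) (c s) * s) else 0)"
    using homog_part_ideal[OF gen_in_ideal[OF j]] by blast
  from bchoice[OF ballI[OF gen_combination]]
  obtain \<beta> where \<beta>: "\<forall>s\<in>G. s = (\<Sum>k<r 1. poly_scale (\<beta> s k) (gen k))" ..
  text \<open>Rewriting the generators of \<open>I\<close> in \<open>F\<close> through the \<open>gen k\<close> exhibits \<open>gen j\<close> as a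
    combination of all generators with coefficients of positive degree; the resulting syzygy has
    constant term 1 at \<open>j\<close>, which minimality forbids.\<close>
  define h where "h k = (\<Sum>s\<in>F. homog_part (D - 2) (c s) * const_poly (\<beta> s k))" for k
  define u where "u k = (if k < r 1 then unit_vec j k - h k else 0)" for k
  have u: "vec_in X (r 1) u"
    unfolding vec_in_def u_def h_def unit_vec_def using F(3)
    by (auto intro!: in_ring_diff in_ring_uminus in_ring_sum in_ring_mult in_ring_homog_part)
  have "d1 u = (\<Sum>k<r 1. gen k * unit_vec j k) - (\<Sum>k<r 1. gen k * h k)"
    by (simp add: d1_def u_def right_diff_distrib sum_subtractf)
  also have "(\<Sum>k<r 1. gen k * unit_vec j k) = gen j"
    using j by (simp add: unit_vec_def if_distrib[of "(*) _"] cong: if_cong)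
  also have "(\<Sum>k<r 1. gen k * h k) = (\<Sum>s\<in>F. homog_part (D - 2) (c s) * (\<Sum>k<r 1. poly_scale (\<beta> s k) (gen k)))"
    unfolding h_def
    by (simp add: sum_distrib_left sum_distrib_right sum.swap[of _ F] poly_scale_def algebra_simps)
  also have "\<dots> = (\<Sum>s\<in>F. homog_part (D - 2) (c s) * s)"
    using \<beta> F(2) by (intro sum.cong refl) auto
  also have "\<dots> = gen j"
    using hp hD D by (simp add: homog_iff_homog_part)
  finally have "diff_apply r M 1 u = (\<lambda>_. 0)"
    unfolding diff_apply_1_eq_0_iff by simp
  then have "Poly_Mapping.lookup (u j) 0 = 0"
    using kernel_constant_term[of 1 u j] u j by simp
  moreover have "Poly_Mapping.lookup (h j) 0 = 0"
    unfolding h_def using D by (simp add: lookup_sum lookup_mult_0 lookup_homog_part_0)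
  ultimately show False using j by (simp add: u_def unit_vec_def lookup_minus)
qed

lemma homog_gen_2: "j < r 1 \<Longrightarrow> homog 2 (gen j)"
  using homog_gen[of j] shift_1[of j] by simp

lemma gens_independent:
  assumes "(\<Sum>j<r 1. poly_scale (c j) (gen j)) = 0"
  shows "\<forall>j\<in>{..<r 1}. c j = 0"
proof
  fix j assume j: "j \<in> {..<r 1}"
  define v where "v k = (if k < r 1 then const_poly (c k) else (0::('x, 'k) mpoly))" for k
  have "d1 v = (\<Sum>j<r 1. poly_scale (c j) (gen j))"
    unfolding d1_def by (rule sum.cong) (simp_all add: v_def poly_scale_def mult.commute)
  then have "diff_apply r M 1 v = (\<lambda>_. 0)"
    using assms unfolding diff_apply_1_eq_0_iff by simp
  then have "Poly_Mapping.lookup (v j) 0 = 0"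
    using kernel_constant_term[of 1 v j] j by (simp add: vec_in_def v_def)
  then show "c j = 0" using j by (simp add: v_def)
qed

lemma gen_in_span_monoms:
  assumes j: "j < r 1"
  shows "gen j \<in> polys.span G"
proof -
  obtain F c where F: "F \<subseteq> G"
    and hp: "\<forall>d. homog_part d (gen j) = (if 2 \<le> d then (\<Sum>s\<in>F. homog_part (d - 2) (c s) * s) else 0)"
    using homog_part_ideal[OF gen_in_ideal[OF j]] by blast
  have "gen j = homog_part 2 (gen j)" using homog_gen_2[OF j] by (simp add: homog_iff_homog_part)
  also have "\<dots> = (\<Sum>s\<in>F. poly_scale (Poly_Mapping.lookup (c s) 0) s)"
    using hp by (simp add: homog_part_0_eq_const poly_scale_def)
  also have "\<dots> \<in> polys.span G"
    using F by (intro polys.span_sum polys.span_scale polys.span_base) auto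
  finally show ?thesis .
qed

lemma rank_1: "r 1 = card Q"
proof -
  have "polys.dim (polys.span G) = card {..<r 1}"
  proof (rule polys.dim_eq_card_family)
    show "(\<Sum>j<r 1. poly_scale (c j) (gen j)) = 0 \<Longrightarrow> \<forall>j\<in>{..<r 1}. c j = 0" for c
      by (rule gens_independent)
    show "gen ` {..<r 1} \<subseteq> polys.span G" using gen_in_span_monoms by auto
    have "G \<subseteq> polys.span (gen ` {..<r 1})"
    proof
      fix s assume "s \<in> G"
      then obtain \<beta> where "s = (\<Sum>k<r 1. poly_scale (\<beta> k) (gen k))"
        using gen_combination by blast
      also have "\<dots> \<in> polys.span (gen ` {..<r 1})"
        by (intro polys.span_sum polys.span_scale polys.span_base) auto
      finally show "s \<in> polys.span (gen ` {..<r 1})" .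
    qed
    then show "polys.span G \<subseteq> polys.span (gen ` {..<r 1})"
      by (rule polys.span_minimal[OF _ polys.subspace_span])
  qed simp
  moreover have "polys.dim (polys.span G) = card G"
    using independent_monoms[OF finite_Q] by (rule polys.dim_span_eq_card_independent)
  ultimately show ?thesis using card_image[OF inj_on_subset[OF inj_monom]] by simp
qed

subsection \<open>The linear syzygies\<close>

abbreviation shift_3 :: "nat set" where
  "shift_3 \<equiv> {j. j < r 2 \<and> a 2 j = 3}"

definition linear_vecs :: "(nat \<Rightarrow> ('x, 'k) mpoly) set" where
  "linear_vecs = {v. vec_in X (r 1) v \<and> (\<forall>k. homog 1 (v k))}"

definition linear_syzygies :: "(nat \<Rightarrow> ('x, 'k) mpoly) set" where
  "linear_syzygies = {v \<in> linear_vecs. d1 v = 0}"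

definition syzygy_col :: "nat \<Rightarrow> nat \<Rightarrow> ('x, 'k) mpoly" where
  "syzygy_col j = (\<lambda>k. if k < r 1 then M 2 k j else 0)"

lemma syzygy_col_eq: "j < r 2 \<Longrightarrow> syzygy_col j = diff_apply r M 2 (unit_vec j)"
  using diff_apply_unit_vec[of j 2] by (simp add: syzygy_col_def)

lemma kernel_d1_eq_image_d2: "diff_kernel X r M 1 = diff_image X r M 2"
  using exact[of 1] by (simp add: numeral_2_eq_2)

lemma homog_part_1_entry_2_mult:
  assumes k: "k < r 1" and l: "l < r 2"
  shows "homog_part 1 (M 2 k l * w) = (if a 2 l = 3 then const_poly (Poly_Mapping.lookup w 0) * M 2 k l else 0)"
proof -
  have deg: "if 2 \<le> a 2 l then homog (nat (a 2 l - 2)) (M 2 k l) else M 2 k l = 0"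
    and const: "Poly_Mapping.lookup (M 2 k l) 0 = 0"
    using entry_props(2,3)[of 2 k l] k l shift_1[OF k] by (simp_all cong: if_cong)
  consider "a 2 l < 2" | "a 2 l = 2" | "a 2 l = 3" | "a 2 l > 3" by linarith
  then show ?thesis
  proof cases
    case 1
    then show ?thesis using deg by simp
  next
    case 2
    then show ?thesis using deg const homog_0_eq_0[of "M 2 k l"] by simp
  next
    case 3
    then have "homog 1 (M 2 k l)" using deg by simp
    then have "homog_part 1 (M 2 k l * w) = M 2 k l * homog_part 0 w"
      using homog_part_mult_homog[of 1 "M 2 k l" 1 w] by simp
    then show ?thesis using 3 by (simp add: homog_part_0_eq_const mult.commute)
  next
    case 4
    then have "homog (nat (a 2 l - 2)) (M 2 k l)" using deg by simp
    moreover have "\<not> nat (a 2 l - 2) \<le> 1" using 4 by auto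
    ultimately show ?thesis using 4 by (simp add: homog_part_mult_homog)
  qed
qed

lemma syzygy_col_in_linear_syzygies:
  assumes "j < r 2" "a 2 j = 3"
  shows "syzygy_col j \<in> linear_syzygies"
proof -
  have "syzygy_col j \<in> diff_kernel X r M 1"
    unfolding kernel_d1_eq_image_d2 syzygy_col_eq[OF assms(1)] diff_image_def
    using vec_in_unit_vec[OF assms(1)] by blast
  then have "vec_in X (r 1) (syzygy_col j)" and "d1 (syzygy_col j) = 0"
    unfolding diff_kernel_def diff_apply_1_eq_0_iff by auto
  moreover have "homog 1 (syzygy_col j k)" for k
    using entry_props(2)[of 2 k j] assms shift_1[of k]
    by (auto simp: syzygy_col_def cong: if_cong)
  ultimately show ?thesis by (simp add: linear_syzygies_def linear_vecs_def)
qed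

lemma syzygy_col_combination:
  "k < r 1 \<Longrightarrow> (\<Sum>l\<in>S. vec_scale (c l) (syzygy_col l)) k = (\<Sum>l\<in>S. const_poly (c l) * M 2 k l)"
  by (simp add: vec_scale_apply syzygy_col_def)

lemma syzygy_cols_independent:
  assumes "(\<Sum>j\<in>shift_3. vec_scale (c j) (syzygy_col j)) = 0"
  shows "\<forall>j\<in>shift_3. c j = 0"
proof
  fix j assume j: "j \<in> shift_3"
  define v where "v l = (if l \<in> shift_3 then const_poly (c l) else (0 :: ('x, 'k) mpoly))" for l
  have "diff_apply r M 2 v = (\<lambda>_. 0)"
  proof
    fix k
    have "(\<Sum>l<r 2. M 2 k l * v l) = (\<Sum>l\<in>shift_3. const_poly (c l) * M 2 k l)"
      by (intro sum.mono_neutral_cong_right) (auto simp: v_def)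
    then show "diff_apply r M 2 v k = 0"
      using assms syzygy_col_combination[where S = shift_3 and c = c] by (simp add: diff_apply_def)
  qed
  then have "Poly_Mapping.lookup (v j) 0 = 0"
    using kernel_constant_term[of 2 v j] j by (simp add: vec_in_def v_def)
  then show "c j = 0" using j by (simp add: v_def)
qed

lemma linear_syzygies_span: "linear_syzygies \<subseteq> vecs.span (syzygy_col ` shift_3)"
proof
  fix v assume "v \<in> linear_syzygies"
  then have v: "vec_in X (r 1) v" "\<And>k. homog 1 (v k)" "d1 v = 0"
    by (auto simp: linear_syzygies_def linear_vecs_def)
  then have "v \<in> diff_image X r M 2"
    unfolding kernel_d1_eq_image_d2[symmetric] diff_kernel_def diff_apply_1_eq_0_iff by simp
  then obtain w where w: "v = diff_apply r M 2 w" unfolding diff_image_def by auto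
  have "v = (\<Sum>j\<in>shift_3. vec_scale (Poly_Mapping.lookup (w j) 0) (syzygy_col j))"
  proof
    fix k
    show "v k = (\<Sum>j\<in>shift_3. vec_scale (Poly_Mapping.lookup (w j) 0) (syzygy_col j)) k"
    proof (cases "k < r 1")
      case True
      have "v k = homog_part 1 (v k)" using v(2) by (simp add: homog_iff_homog_part)
      also have "\<dots> = (\<Sum>l<r 2. homog_part 1 (M 2 k l * w l))"
        using True by (simp add: w diff_apply_def homog_part_sum)
      also have "\<dots> = (\<Sum>l\<in>shift_3. const_poly (Poly_Mapping.lookup (w l) 0) * M 2 k l)"
        using True by (intro sum.mono_neutral_cong_right)
          (auto simp: homog_part_1_entry_2_mult simp del: One_nat_def)
      finally show ?thesis using True by (simp add: syzygy_col_combination)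
    next
      case False
      then show ?thesis using v(1) by (simp add: vec_in_def vec_scale_apply syzygy_col_def)
    qed
  qed
  also have "\<dots> \<in> vecs.span (syzygy_col ` shift_3)"
    by (intro vecs.span_sum vecs.span_scale vecs.span_base) auto
  finally show "v \<in> vecs.span (syzygy_col ` shift_3)" .
qed

lemma dim_linear_syzygies: "vecs.dim linear_syzygies = card shift_3"
proof (rule vecs.dim_eq_card_family)
  show "(\<Sum>j\<in>shift_3. vec_scale (c j) (syzygy_col j)) = 0 \<Longrightarrow> \<forall>j\<in>shift_3. c j = 0" for c
    by (rule syzygy_cols_independent)
  show "syzygy_col ` shift_3 \<subseteq> linear_syzygies" using syzygy_col_in_linear_syzygies by auto
qed (simp_all add: linear_syzygies_span)

definition var_vec :: "nat \<times> 'x \<Rightarrow> nat \<Rightarrow> ('x, 'k) mpoly" where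
  "var_vec p k = (if k = fst p then var (snd p) else 0)"

lemma linear_vecs_subspace: "vecs.subspace linear_vecs"
  unfolding vecs.subspace_def linear_vecs_def vec_in_def vec_scale_def
  by (auto intro!: in_ring_add in_ring_mult homog_add homog_const_poly_mult)

lemma var_vec_in_linear_vecs: "p \<in> {..<r 1} \<times> X \<Longrightarrow> var_vec p \<in> linear_vecs"
  using homog_var unfolding linear_vecs_def vec_in_def var_vec_def
  by (auto intro: in_ring_var simp del: One_nat_def)

lemma lookup_var_var_exp: "Poly_Mapping.lookup (var y :: ('x, 'k) mpoly) (var_exp x) = of_bool (y = x)"
  by (simp add: var_eq_monom lookup_monom single_eq_single_iff del: One_nat_def)

lemma var_vecs_independent:
  assumes "(\<Sum>p\<in>{..<r 1} \<times> X. vec_scale (c p) (var_vec p)) = 0"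
  shows "\<forall>p\<in>{..<r 1} \<times> X. c p = 0"
proof
  fix p assume p: "p \<in> {..<r 1} \<times> X"
  have "0 = Poly_Mapping.lookup ((\<Sum>q\<in>{..<r 1} \<times> X. vec_scale (c q) (var_vec q)) (fst p))
      (var_exp (snd p))"
    using assms by simp
  also have "\<dots> = (\<Sum>q\<in>{..<r 1} \<times> X. c q * of_bool (q = p))"
    by (auto simp: vec_scale_apply lookup_sum lookup_const_poly_mult var_vec_def lookup_var_var_exp
        prod_eq_iff simp del: One_nat_def intro!: sum.cong)
  also have "\<dots> = c p" using p finite_vars by (simp add: Int_absorb1)
  finally show "c p = 0" by simp
qed

lemma linear_vecs_span: "linear_vecs \<subseteq> vecs.span (var_vec ` ({..<r 1} \<times> X))"
proof
  fix v assume "v \<in> linear_vecs"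
  then have v: "vec_in X (r 1) v" "\<And>k. homog 1 (v k)" by (auto simp: linear_vecs_def)
  let ?c = "\<lambda>p. Poly_Mapping.lookup (v (fst p)) (var_exp (snd p))"
  have "v = (\<Sum>p\<in>{..<r 1} \<times> X. vec_scale (?c p) (var_vec p))"
  proof
    fix k
    have "(\<Sum>p\<in>{..<r 1} \<times> X. vec_scale (?c p) (var_vec p)) k
        = (\<Sum>j<r 1. \<Sum>x\<in>X. const_poly (?c (j, x)) * (if k = j then var x else 0))"
      by (simp add: vec_scale_apply var_vec_def sum.cartesian_product split_def del: One_nat_def)
    also have "\<dots> = (\<Sum>j<r 1. if k = j then (\<Sum>x\<in>X. poly_scale (?c (k, x)) (var x)) else 0)"
      by (intro sum.cong refl) (auto simp: poly_scale_def)
    also have "\<dots> = v k"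
      using linear_form_expansion[OF v(2), of X] v(1) finite_vars
      by (auto simp: vec_in_def sum.delta' simp del: One_nat_def)
    finally show "v k = (\<Sum>p\<in>{..<r 1} \<times> X. vec_scale (?c p) (var_vec p)) k" by simp
  qed
  also have "\<dots> \<in> vecs.span (var_vec ` ({..<r 1} \<times> X))"
    by (intro vecs.span_sum vecs.span_scale vecs.span_base) auto
  finally show "v \<in> vecs.span (var_vec ` ({..<r 1} \<times> X))" .
qed

lemma dim_linear_vecs: "vecs.dim linear_vecs = r 1 * card X"
proof -
  have "vecs.dim linear_vecs = card ({..<r 1} \<times> X)"
  proof (rule vecs.dim_eq_card_family)
    show "(\<Sum>p\<in>{..<r 1} \<times> X. vec_scale (c p) (var_vec p)) = 0 \<Longrightarrow> \<forall>p\<in>{..<r 1} \<times> X. c p = 0" for c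
      by (rule var_vecs_independent)
  qed (use finite_vars var_vec_in_linear_vecs linear_vecs_span in auto)
  then show ?thesis by (simp add: card_cartesian_product)
qed

lemma linear_d1: "Vector_Spaces.linear vec_scale poly_scale d1"
  unfolding linear_iff
  by (simp add: vecs.vector_space_axioms polys.vector_space_axioms d1_def vec_scale_def poly_scale_def
      distrib_left sum.distrib sum_distrib_left algebra_simps)

lemma var_mult_monom: "var x * monom m = monom (var_exp x + m)"
  by (simp add: monom_add var_eq_monom)

lemma image_d1_subset_span: "d1 ` linear_vecs \<subseteq> polys.span (monom ` var_multiples X Q)"
proof
  fix p assume "p \<in> d1 ` linear_vecs"
  then obtain v where v: "vec_in X (r 1) v" "\<And>k. homog 1 (v k)" and p: "p = d1 v"
    by (auto simp: linear_vecs_def)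
  have products: "{s * t | s t. s \<in> G \<and> t \<in> var ` X} \<subseteq> monom ` var_multiples X Q"
  proof
    fix q assume "q \<in> {s * t | s t. s \<in> G \<and> t \<in> var ` X}"
    then obtain m x where "m \<in> Q" "x \<in> X" "q = var x * monom m" by (auto simp: mult.commute)
    then show "q \<in> monom ` var_multiples X Q" unfolding var_multiples_def by (force simp: var_mult_monom)
  qed
  have "gen k * v k \<in> polys.span (monom ` var_multiples X Q)" if k: "k < r 1" for k
  proof -
    have "v k = (\<Sum>x\<in>X. poly_scale (Poly_Mapping.lookup (v k) (var_exp x)) (var x))"
      using v k finite_vars by (intro linear_form_expansion) (auto simp: vec_in_def)
    also have "\<dots> \<in> polys.span (var ` X)" by (intro polys.span_sum polys.span_scale polys.span_base) auto
    finally show ?thesis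
      using span_mult[OF gen_in_span_monoms[OF k]] polys.span_mono[OF products] by blast
  qed
  then show "p \<in> polys.span (monom ` var_multiples X Q)"
    unfolding p d1_def by (intro polys.span_sum) auto
qed

lemma var_multiples_subset_image_d1: "monom ` var_multiples X Q \<subseteq> d1 ` linear_vecs"
proof
  fix p :: "('x, 'k) mpoly" assume "p \<in> monom ` var_multiples X Q"
  then obtain x m where x: "x \<in> X" and m: "m \<in> Q" and p: "p = var x * monom m"
    by (auto simp: var_multiples_def var_mult_monom)
  obtain \<beta> where \<beta>: "monom m = (\<Sum>k<r 1. poly_scale (\<beta> k) (gen k))"
    using gen_combination m by blast
  define v where "v k = (if k < r 1 then const_poly (\<beta> k) * var x else 0)" for k
  have "v \<in> linear_vecs"
    using x homog_var unfolding linear_vecs_def vec_in_def v_def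
    by (auto intro!: in_ring_mult in_ring_var homog_const_poly_mult simp del: One_nat_def)
  moreover have "d1 v = p"
    unfolding p \<beta> d1_def v_def by (simp add: sum_distrib_left poly_scale_def algebra_simps)
  ultimately show "p \<in> d1 ` linear_vecs" by blast
qed

lemma dim_image_d1: "polys.dim (d1 ` linear_vecs) = card (var_multiples X Q)"
proof -
  have "polys.dim (d1 ` linear_vecs) = card (monom ` var_multiples X Q :: ('x, 'k) mpoly set)"
    using polys.basis_card_eq_dim[OF var_multiples_subset_image_d1 image_d1_subset_span
        independent_monoms[OF finite_var_multiples[OF finite_vars finite_Q]]] ..
  then show ?thesis by (simp add: card_image[OF inj_on_subset[OF inj_monom]])
qed

theorem card_shift_3_plus_card_var_multiples: "card shift_3 + card (var_multiples X Q) = card Q * card X"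
proof -
  have "vecs.dim linear_vecs = vecs.dim linear_syzygies + polys.dim (d1 ` linear_vecs)"
    unfolding linear_syzygies_def
    by (rule vecs_polys.dim_kernel_plus_dim_image[OF linear_d1 linear_vecs_subspace _ linear_vecs_span])
      (simp add: finite_vars)
  then show ?thesis using dim_linear_vecs dim_linear_syzygies dim_image_d1 rank_1 by simp
qed

end

lemma lookup_var_exp: "Poly_Mapping.lookup (var_exp x) y = (if x = y then 1 else 0)"
  by (simp add: var_exp_def lookup_single)

lemma keys_add_nat: "Poly_Mapping.keys (m + n :: 'x \<Rightarrow>\<^sub>0 nat) = Poly_Mapping.keys m \<union> Poly_Mapping.keys n"
  by (auto simp: in_keys_iff lookup_add)

lemma var_exp_pair_eq_iff: "var_exp f + var_exp g = var_exp f' + var_exp g' \<longleftrightarrow> {f, g} = {f', g'}"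
proof
  assume "var_exp f + var_exp g = var_exp f' + var_exp g'"
  then have "Poly_Mapping.keys (var_exp f + var_exp g) = Poly_Mapping.keys (var_exp f' + var_exp g')"
    by (simp only:)
  then show "{f, g} = {f', g'}" by (simp add: keys_add_nat insert_commute)
qed (auto simp: doubleton_eq_iff add.commute)

lemma lookup_var_exp_triple:
  "distinct [f, g, h] \<Longrightarrow> Poly_Mapping.lookup (var_exp f + var_exp g + var_exp h) y = (if y \<in> {f, g, h} then 1 else 0)"
  by (auto simp: lookup_add lookup_var_exp)

lemma keys_var_exp_triple: "Poly_Mapping.keys (var_exp f + var_exp g + var_exp h) = {f, g, h}"
  by (auto simp: keys_add_nat)

lemma var_exp_triple_eq_iff:
  assumes "distinct [f, g, h]" "distinct [f', g', h']"
  shows "var_exp f + var_exp g + var_exp h = var_exp f' + var_exp g' + var_exp h' \<longleftrightarrow> {f, g, h} = {f', g', h'}"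
proof
  assume "{f, g, h} = {f', g', h'}"
  then show "var_exp f + var_exp g + var_exp h = var_exp f' + var_exp g' + var_exp h'"
    by (intro poly_mapping_eqI) (simp add: lookup_var_exp_triple[OF assms(1)] lookup_var_exp_triple[OF assms(2)])
next
  assume eq: "var_exp f + var_exp g + var_exp h = var_exp f' + var_exp g' + var_exp h'"
  have "Poly_Mapping.keys (var_exp f + var_exp g + var_exp h) = Poly_Mapping.keys (var_exp f' + var_exp g' + var_exp h')"
    by (simp only: eq)
  then show "{f, g, h} = {f', g', h'}" by (simp only: keys_var_exp_triple)
qed

definition square_exp :: "'a \<times> 'a \<Rightarrow> 'a \<Rightarrow>\<^sub>0 nat" where
  "square_exp = (\<lambda>(f, g). var_exp f + var_exp f + var_exp g)"

definition triple_exp :: "'a \<times> 'a \<times> 'a \<Rightarrow> 'a \<Rightarrow>\<^sub>0 nat" where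
  "triple_exp = (\<lambda>(f, g, h). var_exp f + var_exp g + var_exp h)"

lemma card_eq_mult_card_image:
  assumes "finite A" and "\<And>b. b \<in> \<phi> ` A \<Longrightarrow> card {a \<in> A. \<phi> a = b} = k"
  shows "card A = k * card (\<phi> ` A)"
proof -
  have "card A = (\<Sum>a\<in>A. 1)" by simp
  also have "\<dots> = (\<Sum>b\<in>\<phi> ` A. \<Sum>a\<in>{a \<in> A. \<phi> a = b}. 1)"
    by (rule sum.image_gen[OF assms(1)])
  also have "\<dots> = k * card (\<phi> ` A)" using assms(2) by simp
  finally show ?thesis .
qed

definition distinct_triples :: "'a set \<Rightarrow> ('a \<times> 'a \<times> 'a) set" where
  "distinct_triples A = (SIGMA f:A. SIGMA g:A - {f}. A - {f, g})"

lemma mem_distinct_triples: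
  "(f, g, h) \<in> distinct_triples A \<longleftrightarrow> f \<in> A \<and> g \<in> A \<and> h \<in> A \<and> distinct [f, g, h]"
  by (auto simp: distinct_triples_def)

lemma finite_distinct_triples: "finite A \<Longrightarrow> finite (distinct_triples A)"
  by (simp add: distinct_triples_def)

lemma card_distinct_triples: "finite A \<Longrightarrow> card (distinct_triples A) = card A * (card A - 1) * (card A - 2)"
proof -
  assume A: "finite A"
  have "card (distinct_triples A) = (\<Sum>f\<in>A. \<Sum>g\<in>A - {f}. card (A - {f, g}))"
    using A by (simp add: distinct_triples_def card_SigmaI)
  also have "\<dots> = (\<Sum>f\<in>A. \<Sum>g\<in>A - {f}. card A - 2)"
    using A by (intro sum.cong refl) (auto simp: card_Diff_subset)
  also have "\<dots> = card A * (card A - 1) * (card A - 2)"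
    using A by (simp add: card_Diff_subset)
  finally show ?thesis .
qed

lemma mem_permutations_3:
  assumes "distinct [a, b, c]" "{a, b, c} = {f, g, h}"
  shows "(a, b, c) \<in> {(f, g, h), (f, h, g), (g, f, h), (g, h, f), (h, f, g), (h, g, f)}"
proof -
  have "a \<in> {f, g, h}" "b \<in> {f, g, h}" "c \<in> {f, g, h}" using assms(2) by blast+
  then show ?thesis using assms by auto
qed

locale finite_graph =
  fixes X :: "'a set" and adj :: "'a \<Rightarrow> 'a \<Rightarrow> bool"
  assumes finite_X: "finite X"
    and adj_sym: "adj f g \<Longrightarrow> adj g f"
    and adj_irrefl: "\<not> adj f f"
    and adj_in_X: "adj f g \<Longrightarrow> f \<in> X"
begin

definition nbhd :: "'a \<Rightarrow> 'a set" where
  "nbhd f = {g. adj f g}"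

definition adj_pairs :: "('a \<times> 'a) set" where
  "adj_pairs = {(f, g). adj f g}"

definition edge_exps :: "('a \<Rightarrow>\<^sub>0 nat) set" where
  "edge_exps = {var_exp f + var_exp g | f g. adj f g}"

abbreviation triples :: "('a \<times> 'a \<times> 'a) set" where
  "triples \<equiv> distinct_triples X"

definition connected_triples :: "('a \<times> 'a \<times> 'a) set" where
  "connected_triples = {(f, g, h) \<in> triples. adj f g \<or> adj g h \<or> adj f h}"

definition triangles :: "('a \<times> 'a \<times> 'a) set" where
  "triangles = {(f, g, h). adj f g \<and> adj g h \<and> adj f h}"

lemma adj_commute: "adj f g \<longleftrightarrow> adj g f"
  using adj_sym by blast

lemma adj_in_X': "adj f g \<Longrightarrow> g \<in> X"
  using adj_in_X adj_sym by blast

lemma adj_neq: "adj f g \<Longrightarrow> f \<noteq> g"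
  using adj_irrefl by blast

lemma finite_adj_pairs: "finite adj_pairs"
  by (rule finite_subset[of _ "X \<times> X"]) (auto simp: adj_pairs_def finite_X adj_in_X adj_in_X')

lemma finite_triples: "finite triples"
  by (rule finite_distinct_triples[OF finite_X])

lemma edge_exps_eq: "edge_exps = (\<lambda>(f, g). var_exp f + var_exp g) ` adj_pairs"
  by (auto simp: edge_exps_def adj_pairs_def)

lemma finite_edge_exps: "finite edge_exps"
  unfolding edge_exps_eq using finite_adj_pairs by simp

lemma mon_deg_edge_exps: "m \<in> edge_exps \<Longrightarrow> mon_deg m = 2"
  by (auto simp: edge_exps_def)

lemma keys_edge_exps: "m \<in> edge_exps \<Longrightarrow> Poly_Mapping.keys m \<subseteq> X"
  by (auto simp: edge_exps_def keys_add_nat adj_in_X adj_in_X')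

lemma card_adj_pairs: "card adj_pairs = 2 * card edge_exps"
proof -
  have "card adj_pairs = 2 * card ((\<lambda>(f, g). var_exp f + var_exp g) ` adj_pairs)"
  proof (rule card_eq_mult_card_image[OF finite_adj_pairs])
    fix m assume "m \<in> (\<lambda>(f, g). var_exp f + var_exp g) ` adj_pairs"
    then obtain f g where fg: "adj f g" and m: "m = var_exp f + var_exp g"
      by (auto simp: adj_pairs_def)
    then have "{p \<in> adj_pairs. (\<lambda>(f, g). var_exp f + var_exp g) p = m} = {(f, g), (g, f)}"
      by (auto simp: adj_pairs_def var_exp_pair_eq_iff doubleton_eq_iff adj_commute)
    then show "card {p \<in> adj_pairs. (\<lambda>(f, g). var_exp f + var_exp g) p = m} = 2"
      using adj_neq[OF fg] by simp
  qed
  then show ?thesis by (simp add: edge_exps_eq)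
qed

lemma var_exp_triple_mem_var_multiples:
  "x \<in> X \<Longrightarrow> adj f g \<Longrightarrow> var_exp x + var_exp f + var_exp g \<in> var_multiples X edge_exps"
  unfolding var_multiples_def edge_exps_def by (auto simp: add.assoc)

lemma var_multiples_edge_exps:
  "var_multiples X edge_exps = square_exp ` adj_pairs \<union> triple_exp ` connected_triples"
proof (intro equalityI subsetI)
  fix m assume "m \<in> var_multiples X edge_exps"
  then obtain x f g where x: "x \<in> X" and fg: "adj f g" and m: "m = var_exp x + var_exp f + var_exp g"
    by (auto simp: var_multiples_def edge_exps_def add.assoc)
  consider "x = f" | "x = g" | "x \<noteq> f" "x \<noteq> g" by blast
  then show "m \<in> square_exp ` adj_pairs \<union> triple_exp ` connected_triples"
  proof cases
    case 1
    then have "m = square_exp (f, g)" using m by (simp add: square_exp_def)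
    then show ?thesis using fg by (auto simp: adj_pairs_def)
  next
    case 2
    then have "m = square_exp (g, f)" using m by (simp add: square_exp_def ac_simps)
    then show ?thesis using fg adj_sym by (auto simp: adj_pairs_def)
  next
    case 3
    then have "(x, f, g) \<in> connected_triples"
      using x fg adj_neq[OF fg] adj_in_X[OF fg] adj_in_X'[OF fg] by (simp add: connected_triples_def mem_distinct_triples)
    moreover have "m = triple_exp (x, f, g)" using m by (simp add: triple_exp_def)
    ultimately show ?thesis by blast
  qed
next
  fix m assume "m \<in> square_exp ` adj_pairs \<union> triple_exp ` connected_triples"
  then show "m \<in> var_multiples X edge_exps"
  proof
    assume "m \<in> square_exp ` adj_pairs"
    then obtain f g where "adj f g" "m = var_exp f + var_exp f + var_exp g"
      by (auto simp: adj_pairs_def square_exp_def)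
    then show ?thesis using var_exp_triple_mem_var_multiples adj_in_X by blast
  next
    assume "m \<in> triple_exp ` connected_triples"
    then obtain f g h where t: "(f, g, h) \<in> triples" "adj f g \<or> adj g h \<or> adj f h"
      and m: "m = var_exp f + var_exp g + var_exp h"
      by (auto simp: connected_triples_def triple_exp_def)
    from t(2) show ?thesis
    proof (elim disjE)
      assume "adj f g"
      then show ?thesis using m t(1) var_exp_triple_mem_var_multiples[of h f g]
        by (simp add: mem_distinct_triples ac_simps)
    next
      assume "adj g h"
      then show ?thesis using m t(1) var_exp_triple_mem_var_multiples[of f g h]
        by (simp add: mem_distinct_triples ac_simps)
    next
      assume "adj f h"
      then show ?thesis using m t(1) var_exp_triple_mem_var_multiples[of g f h]
        by (simp add: mem_distinct_triples ac_simps)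
    qed
  qed
qed

lemma inj_on_square_exp: "inj_on square_exp adj_pairs"
proof (rule inj_onI)
  fix p q assume "p \<in> adj_pairs" "q \<in> adj_pairs" and eq: "square_exp p = square_exp q"
  then obtain f g f' g' where p: "p = (f, g)" "adj f g" and q: "q = (f', g')" "adj f' g'"
    by (auto simp: adj_pairs_def)
  have eq': "var_exp f + var_exp f + var_exp g = var_exp f' + var_exp f' + var_exp g'"
    using eq by (simp add: p q square_exp_def)
  then have "Poly_Mapping.lookup (var_exp f + var_exp f + var_exp g) f
      = Poly_Mapping.lookup (var_exp f' + var_exp f' + var_exp g') f" by (simp only:)
  then have "f' = f"
    using adj_neq[OF p(2)] adj_neq[OF q(2)] by (auto simp: lookup_add lookup_var_exp split: if_splits)
  with eq' have "g' = g" by simp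
  with \<open>f' = f\<close> show "p = q" by (simp add: p q)
qed

lemma square_exp_triple_exp_disjoint: "square_exp ` adj_pairs \<inter> triple_exp ` triples = {}"
proof -
  have "square_exp (f, g) \<noteq> triple_exp t" if "adj f g" "t \<in> triples" for f g t
  proof -
    obtain a b c where t: "t = (a, b, c)" "distinct [a, b, c]"
      using \<open>t \<in> triples\<close> by (cases t) (auto simp: mem_distinct_triples)
    have "Poly_Mapping.lookup (square_exp (f, g)) f = 2"
      using adj_neq[OF \<open>adj f g\<close>] by (simp add: square_exp_def lookup_add lookup_var_exp)
    moreover have "Poly_Mapping.lookup (triple_exp t) f \<le> 1"
      using t by (simp add: triple_exp_def lookup_var_exp_triple)
    ultimately show ?thesis by auto
  qed
  then show ?thesis by (auto simp: adj_pairs_def)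
qed

lemma finite_connected_triples: "finite connected_triples"
  by (rule finite_subset[OF _ finite_triples]) (auto simp: connected_triples_def)

lemma card_var_multiples_edge_exps:
  "card (var_multiples X edge_exps) = card adj_pairs + card (triple_exp ` connected_triples)"
proof -
  have "square_exp ` adj_pairs \<inter> triple_exp ` connected_triples = {}"
    using square_exp_triple_exp_disjoint by (auto simp: connected_triples_def)
  then show ?thesis unfolding var_multiples_edge_exps
    by (simp add: card_Un_disjoint finite_adj_pairs finite_connected_triples card_image[OF inj_on_square_exp])
qed

lemma card_connected_triples: "card connected_triples = 6 * card (triple_exp ` connected_triples)"
proof (rule card_eq_mult_card_image[OF finite_connected_triples])
  fix m assume "m \<in> triple_exp ` connected_triples"
  then obtain f g h where t: "(f, g, h) \<in> connected_triples" and m: "m = triple_exp (f, g, h)" by auto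
  then have d: "distinct [f, g, h]" "f \<in> X" "g \<in> X" "h \<in> X" and c: "adj f g \<or> adj g h \<or> adj f h"
    by (auto simp: connected_triples_def mem_distinct_triples)
  let ?P = "{(f, g, h), (f, h, g), (g, f, h), (g, h, f), (h, f, g), (h, g, f)}"
  have "{t \<in> connected_triples. triple_exp t = m} = ?P"
  proof (intro equalityI subsetI)
    fix t assume "t \<in> {t \<in> connected_triples. triple_exp t = m}"
    then obtain a b c where t: "t = (a, b, c)" "distinct [a, b, c]" "triple_exp (a, b, c) = m"
      by (cases t) (auto simp: connected_triples_def mem_distinct_triples)
    then have "{a, b, c} = {f, g, h}" using d(1) m by (simp add: triple_exp_def var_exp_triple_eq_iff)
    then show "t \<in> ?P" unfolding t(1) by (rule mem_permutations_3[OF t(2)])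
  next
    fix t assume "t \<in> ?P"
    then show "t \<in> {t \<in> connected_triples. triple_exp t = m}"
      using d c m by (auto simp: connected_triples_def mem_distinct_triples triple_exp_def ac_simps adj_commute)
  qed
  then show "card {t \<in> connected_triples. triple_exp t = m} = 6" using d(1) by simp
qed

lemma sum_triples_swap: "(\<Sum>(f, g, h)\<in>triples. F g f h) = (\<Sum>(f, g, h)\<in>triples. F f g h)"
  by (rule sum.reindex_bij_witness[of _ "\<lambda>(f, g, h). (g, f, h)" "\<lambda>(f, g, h). (g, f, h)"])
    (auto simp: mem_distinct_triples)

lemma sum_triples_rotate: "(\<Sum>(f, g, h)\<in>triples. F g h f) = (\<Sum>(f, g, h)\<in>triples. F f g h)"
  by (rule sum.reindex_bij_witness[of _ "\<lambda>(f, g, h). (h, f, g)" "\<lambda>(f, g, h). (g, h, f)"])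
    (auto simp: mem_distinct_triples)

lemma sum_triples: "(\<Sum>t\<in>triples. F t) = (\<Sum>f\<in>X. \<Sum>g\<in>X - {f}. \<Sum>h\<in>X - {f, g}. F (f, g, h))"
  by (simp add: distinct_triples_def sum.Sigma finite_X split_def)

lemma nbhd_subset: "nbhd f \<subseteq> X - {f}"
  using adj_irrefl by (auto simp: nbhd_def adj_in_X')

lemma finite_nbhd: "finite (nbhd f)"
  using finite_subset[OF nbhd_subset] finite_X by blast

lemma card_adj_pairs_sum: "card adj_pairs = (\<Sum>f\<in>X. card (nbhd f))"
proof -
  have "adj_pairs = (SIGMA f:X. nbhd f)"
    by (auto simp: adj_pairs_def nbhd_def adj_in_X)
  then show ?thesis by (simp add: finite_X finite_nbhd)
qed

lemma sum_of_bool_triples: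
  "(\<Sum>(f, g, h)\<in>triples. of_bool (P f g h) :: nat) = card {(f, g, h) \<in> triples. P f g h}"
proof -
  have "{(f, g, h) \<in> triples. P f g h} = {t \<in> triples. case t of (f, g, h) \<Rightarrow> P f g h}"
    by auto
  then have "card {(f, g, h) \<in> triples. P f g h} = (\<Sum>t\<in>triples. if (case t of (f, g, h) \<Rightarrow> P f g h) then 1 else 0)"
    using sum.inter_filter[OF finite_triples, of "\<lambda>_. 1::nat"] by simp
  also have "\<dots> = (\<Sum>(f, g, h)\<in>triples. of_bool (P f g h))" by (intro sum.cong refl) auto
  finally show ?thesis by simp
qed

lemma sum_of_bool_adj: "(\<Sum>g\<in>X - A. of_bool (adj f g)) = card (nbhd f - A)" if "f \<in> A"
proof -
  have "(X - A) \<inter> {g. adj f g} = nbhd f - A" using nbhd_subset by (auto simp: nbhd_def)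
  then show ?thesis using finite_X by simp
qed

lemma sum_triples_adj: "(\<Sum>(f, g, h)\<in>triples. of_bool (adj f g)) = (card X - 2) * card adj_pairs"
proof -
  have "(\<Sum>(f, g, h)\<in>triples. of_bool (adj f g)) = (\<Sum>f\<in>X. \<Sum>g\<in>X - {f}. of_bool (adj f g) * (card X - 2))"
    unfolding sum_triples using finite_X by (intro sum.cong refl) (auto simp: card_Diff_subset)
  also have "\<dots> = (\<Sum>f\<in>X. card (nbhd f) * (card X - 2))"
  proof (rule sum.cong[OF refl])
    fix f
    have "nbhd f - {f} = nbhd f" using adj_irrefl by (auto simp: nbhd_def)
    then show "(\<Sum>g\<in>X - {f}. of_bool (adj f g) * (card X - 2)) = card (nbhd f) * (card X - 2)"
      by (simp add: sum_distrib_right[symmetric] sum_of_bool_adj)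
  qed
  also have "\<dots> = (card X - 2) * card adj_pairs"
    by (simp add: card_adj_pairs_sum sum_distrib_left mult.commute)
  finally show ?thesis .
qed

lemma sum_triples_common_nbhd:
  "(\<Sum>(f, g, h)\<in>triples. of_bool (adj f g \<and> adj f h)) = (\<Sum>f\<in>X. card (nbhd f) * (card (nbhd f) - 1))"
proof -
  have "(\<Sum>(f, g, h)\<in>triples. of_bool (adj f g \<and> adj f h))
      = (\<Sum>f\<in>X. \<Sum>g\<in>X - {f}. of_bool (adj f g) * (card (nbhd f) - 1))"
  proof (unfold sum_triples prod.case, intro sum.cong refl)
    fix f g assume "g \<in> X - {f}"
    have "card (nbhd f - {f, g}) = card (nbhd f) - 1" if "adj f g"
    proof -
      have "nbhd f - {f, g} = nbhd f - {g}" using adj_irrefl by (auto simp: nbhd_def)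
      then show ?thesis using that finite_nbhd by (simp add: nbhd_def)
    qed
    then show "(\<Sum>h\<in>X - {f, g}. of_bool (adj f g \<and> adj f h)) = of_bool (adj f g) * (card (nbhd f) - 1)"
      by (cases "adj f g") (simp_all add: sum_of_bool_adj)
  qed
  also have "\<dots> = (\<Sum>f\<in>X. card (nbhd f) * (card (nbhd f) - 1))"
  proof (rule sum.cong[OF refl])
    fix f
    have "nbhd f - {f} = nbhd f" using adj_irrefl by (auto simp: nbhd_def)
    then show "(\<Sum>g\<in>X - {f}. of_bool (adj f g) * (card (nbhd f) - 1)) = card (nbhd f) * (card (nbhd f) - 1)"
      by (simp add: sum_distrib_right[symmetric] sum_of_bool_adj)
  qed
  finally show ?thesis .
qed

lemma triangles_subset: "triangles \<subseteq> triples"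
  by (auto simp: triangles_def mem_distinct_triples adj_in_X adj_in_X' dest: adj_neq)

lemma card_connected_triples_count:
  "card connected_triples + 3 * (\<Sum>f\<in>X. card (nbhd f) * (card (nbhd f) - 1))
    = 3 * ((card X - 2) * card adj_pairs) + card triangles"
proof -
  let ?S = "\<lambda>P. \<Sum>(f, g, h)\<in>triples. of_bool (P f g h) :: nat"
  have "of_bool (adj f g \<or> adj g h \<or> adj f h) + of_bool (adj f g \<and> adj f h)
        + of_bool (adj g f \<and> adj g h) + of_bool (adj h f \<and> adj h g)
      = of_bool (adj f g) + of_bool (adj g h) + of_bool (adj h f)
        + (of_bool (adj f g \<and> adj g h \<and> adj f h) :: nat)" for f g h
    using adj_commute[of f g] adj_commute[of g h] adj_commute[of f h] by auto
  then have "?S (\<lambda>f g h. adj f g \<or> adj g h \<or> adj f h) + ?S (\<lambda>f g h. adj f g \<and> adj f h)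
        + ?S (\<lambda>f g h. adj g f \<and> adj g h) + ?S (\<lambda>f g h. adj h f \<and> adj h g)
      = ?S (\<lambda>f g h. adj f g) + ?S (\<lambda>f g h. adj g h) + ?S (\<lambda>f g h. adj h f)
        + ?S (\<lambda>f g h. adj f g \<and> adj g h \<and> adj f h)"
    by (simp add: sum.distrib[symmetric] split_def)
  moreover have "?S (\<lambda>f g h. adj g f \<and> adj g h) = ?S (\<lambda>f g h. adj f g \<and> adj f h)"
    by (rule sum_triples_swap)
  moreover have "?S (\<lambda>f g h. adj h f \<and> adj h g) = ?S (\<lambda>f g h. adj f g \<and> adj f h)"
    by (rule sum_triples_rotate[symmetric])
  moreover have "?S (\<lambda>f g h. adj g h) = ?S (\<lambda>f g h. adj f g)"
    by (rule sum_triples_rotate)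
  moreover have "?S (\<lambda>f g h. adj h f) = ?S (\<lambda>f g h. adj f g)"
    by (rule sum_triples_rotate[symmetric])
  moreover have "?S (\<lambda>f g h. adj f g \<or> adj g h \<or> adj f h) = card connected_triples"
    unfolding sum_of_bool_triples connected_triples_def ..
  moreover have "{(f, g, h) \<in> triples. adj f g \<and> adj g h \<and> adj f h} = triangles"
    using triangles_subset by (auto simp: triangles_def)
  then have "?S (\<lambda>f g h. adj f g \<and> adj g h \<and> adj f h) = card triangles"
    unfolding sum_of_bool_triples by simp
  ultimately show ?thesis using sum_triples_adj sum_triples_common_nbhd by simp
qed

lemma card_X_ge_2: "adj_pairs \<noteq> {} \<Longrightarrow> 2 \<le> card X"
proof -
  assume "adj_pairs \<noteq> {}"
  then obtain f g where "adj f g" by (auto simp: adj_pairs_def)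
  then have "{f, g} \<subseteq> X" "f \<noteq> g" using adj_in_X adj_in_X' adj_neq by auto
  then show ?thesis using card_mono[OF finite_X, of "{f, g}"] by simp
qed

theorem card_var_multiples_edge_exps_count:
  "6 * card (var_multiples X edge_exps) + 3 * (\<Sum>f\<in>X. card (nbhd f) * (card (nbhd f) - 1))
    = 6 * card edge_exps * card X + card triangles"
proof -
  have split: "2 * card adj_pairs + (card X - 2) * card adj_pairs = card X * card adj_pairs"
  proof (cases "adj_pairs = {}")
    case False
    have "2 * card adj_pairs + (card X - 2) * card adj_pairs = (2 + (card X - 2)) * card adj_pairs"
      by (rule add_mult_distrib[symmetric])
    also have "2 + (card X - 2) = card X" using card_X_ge_2[OF False] by simp
    finally show ?thesis .
  qed simp
  have "6 * card (var_multiples X edge_exps) + 3 * (\<Sum>f\<in>X. card (nbhd f) * (card (nbhd f) - 1))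
      = 6 * card adj_pairs + (card connected_triples + 3 * (\<Sum>f\<in>X. card (nbhd f) * (card (nbhd f) - 1)))"
    using card_var_multiples_edge_exps card_connected_triples by simp
  also have "\<dots> = 3 * (2 * card adj_pairs + (card X - 2) * card adj_pairs) + card triangles"
    by (simp only: card_connected_triples_count) simp
  also have "\<dots> = 6 * card edge_exps * card X + card triangles"
    unfolding split unfolding card_adj_pairs by simp
  finally show ?thesis .
qed

end

definition line_adj :: "'v set set \<Rightarrow> 'v set \<Rightarrow> 'v set \<Rightarrow> bool" where
  "line_adj E f g \<longleftrightarrow> f \<in> E \<and> g \<in> E \<and> f \<noteq> g \<and> f \<inter> g \<noteq> {}"

locale triangle_free_graph =
  fixes V :: "'v set" and E :: "'v set set"
  assumes simple: "simple_graph V E"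
    and no_triangle: "{a, b} \<in> E \<Longrightarrow> {b, c} \<in> E \<Longrightarrow> {a, c} \<in> E \<Longrightarrow> a = b \<or> b = c \<or> a = c"
begin

lemma finite_V: "finite V"
  using simple by (simp add: simple_graph_def)

lemma edgeE:
  assumes "e \<in> E"
  obtains x y where "x \<in> V" "y \<in> V" "x \<noteq> y" "e = {x, y}"
  using simple assms unfolding simple_graph_def by blast

lemma edges_subset: "E \<subseteq> Pow V"
  by (auto elim: edgeE)

lemma finite_E: "finite E"
  using finite_subset[OF edges_subset] finite_V by blast

lemma edge_eq: "e \<in> E \<Longrightarrow> u \<in> e \<Longrightarrow> v \<in> e \<Longrightarrow> u \<noteq> v \<Longrightarrow> e = {u, v}"
  by (elim edgeE) auto

sublocale line: finite_graph E "line_adj E"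
  by unfold_locales (auto simp: line_adj_def finite_E)

lemma card_line_nbhd:
  assumes e: "e \<in> E"
  shows "card (line.nbhd e) = (\<Sum>u\<in>e. vdeg E u) - 2"
proof -
  obtain x y where xy: "x \<noteq> y" "e = {x, y}" using e by (elim edgeE)
  let ?X = "{f \<in> E. x \<in> f}" and ?Y = "{f \<in> E. y \<in> f}"
  have fin: "finite ?X" "finite ?Y" using finite_E by auto
  have "?X \<inter> ?Y = {e}" using edge_eq e xy by blast
  then have "card (?X \<union> ?Y) = card ?X + card ?Y - 1"
    using card_Un_Int[OF fin] by simp
  moreover have "line.nbhd e = (?X \<union> ?Y) - {e}" "e \<in> ?X \<union> ?Y"
    using e xy by (auto simp: line.nbhd_def line_adj_def)
  moreover have "(\<Sum>u\<in>e. vdeg E u) = card ?X + card ?Y"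
    using xy by (simp add: vdeg_def)
  ultimately show ?thesis using fin by simp
qed

lemma line_triangle_common_vertex:
  assumes fg: "line_adj E f g" and gh: "line_adj E g h" and fh: "line_adj E f h"
  shows "\<exists>u. u \<in> f \<inter> g \<inter> h"
proof (rule ccontr)
  assume no: "\<nexists>u. u \<in> f \<inter> g \<inter> h"
  obtain u where u: "u \<in> f" "u \<in> g" using fg unfolding line_adj_def by blast
  obtain v where v: "v \<in> g" "v \<in> h" using gh unfolding line_adj_def by blast
  obtain w where w: "w \<in> f" "w \<in> h" using fh unfolding line_adj_def by blast
  have E: "f \<in> E" "g \<in> E" "h \<in> E" using fg gh unfolding line_adj_def by auto
  have "u \<noteq> v" "u \<noteq> w" "v \<noteq> w" using no u v w by blast+
  then have "f = {u, w}" "g = {u, v}" "h = {v, w}"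
    using edge_eq E u v w by blast+
  then show False
    using no_triangle[of u v w] E \<open>u \<noteq> v\<close> \<open>u \<noteq> w\<close> \<open>v \<noteq> w\<close> by (simp add: insert_commute)
qed

lemma line_triangles_eq: "line.triangles = (\<Union>u\<in>V. distinct_triples {e \<in> E. u \<in> e})"
proof (intro equalityI subsetI)
  fix t assume "t \<in> line.triangles"
  then obtain f g h where t: "t = (f, g, h)" and adj: "line_adj E f g" "line_adj E g h" "line_adj E f h"
    by (auto simp: line.triangles_def)
  obtain u where u: "u \<in> f" "u \<in> g" "u \<in> h" using line_triangle_common_vertex[OF adj] by blast
  moreover have "u \<in> V" using u adj edges_subset by (auto simp: line_adj_def)
  ultimately show "t \<in> (\<Union>u\<in>V. distinct_triples {e \<in> E. u \<in> e})"
    using adj by (auto simp: t mem_distinct_triples line_adj_def)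
next
  fix t assume "t \<in> (\<Union>u\<in>V. distinct_triples {e \<in> E. u \<in> e})"
  then show "t \<in> line.triangles"
    by (auto simp: line.triangles_def mem_distinct_triples line_adj_def)
qed

lemma card_line_triangles:
  "card line.triangles = (\<Sum>u\<in>V. vdeg E u * (vdeg E u - 1) * (vdeg E u - 2))"
proof -
  have "distinct_triples {e \<in> E. u \<in> e} \<inter> distinct_triples {e \<in> E. v \<in> e} = {}"
    if "u \<noteq> v" for u v
    using that edge_eq by (fastforce simp: mem_distinct_triples)
  then have "card line.triangles = (\<Sum>u\<in>V. card (distinct_triples {e \<in> E. u \<in> e}))"
    unfolding line_triangles_eq
    by (intro card_UN_disjoint) (auto simp: finite_V finite_E finite_distinct_triples)
  also have "\<dots> = (\<Sum>u\<in>V. vdeg E u * (vdeg E u - 1) * (vdeg E u - 2))"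
    by (simp add: card_distinct_triples finite_E vdeg_def)
  finally show ?thesis .
qed

end

lemma tree_triangle_free:
  assumes "is_tree V E"
  shows "triangle_free_graph V E"
proof
  show simple: "simple_graph V E" using assms by (simp add: is_tree_def)
  fix a b c assume E: "{a, b} \<in> E" "{b, c} \<in> E" "{a, c} \<in> E"
  show "a = b \<or> b = c \<or> a = c"
  proof (rule ccontr)
    assume "\<not> (a = b \<or> b = c \<or> a = c)"
    then have "distinct [a, b, c]" by auto
    moreover have "e \<subseteq> V" if "e \<in> E" for e using simple that by (auto simp: simple_graph_def)
    then have "set [a, b, c] \<subseteq> V" using E by auto
    moreover have "\<forall>i < 3. {[a, b, c] ! i, [a, b, c] ! ((i + 1) mod 3)} \<in> E"
    proof (intro allI impI)
      fix i :: nat assume "i < 3"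
      then consider "i = 0" | "i = 1" | "i = 2" by linarith
      then show "{[a, b, c] ! i, [a, b, c] ! ((i + 1) mod 3)} \<in> E"
        by cases (use E in \<open>simp_all add: insert_commute\<close>)
    qed
    ultimately have "\<exists>cs. 3 \<le> length cs \<and> distinct cs \<and> set cs \<subseteq> V \<and>
        (\<forall>i < length cs. {cs ! i, cs ! ((i + 1) mod length cs)} \<in> E)"
      by (intro exI[of _ "[a, b, c]"]) simp
    then show False using assms unfolding is_tree_def graph_acyclic_def by blast
  qed
qed

lemma two_mult_choose_two: "2 * (n choose 2) = n * (n - 1)"
proof -
  have "even (n * (n - 1))" by (cases "even n") simp_all
  then show ?thesis by (simp add: choose_two)
qed

lemma six_mult_choose_three: "6 * (n choose 3) = n * (n - 1) * (n - 2)"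
proof (induction n)
  case (Suc n)
  have "Suc n choose 3 = (n choose 2) + (n choose 3)"
    using binomial_Suc_Suc[of n 2] by simp
  then have "6 * (Suc n choose 3) = 3 * (2 * (n choose 2)) + 6 * (n choose 3)"
    by simp
  also have "\<dots> = 3 * (n * (n - 1)) + n * (n - 1) * (n - 2)"
    by (simp only: Suc.IH two_mult_choose_two)
  also have "\<dots> = Suc n * (Suc n - 1) * (Suc n - 2)"
  proof (cases "n < 2")
    case False
    then obtain m where "n = m + 2" by (metis add.commute le_add_diff_inverse not_less)
    then show ?thesis by (simp add: algebra_simps)
  qed (auto simp: less_2_cases_iff)
  finally show ?case .
qed simp

context triangle_free_graph
begin

lemma line_edge_ideal_eq_ideal_gen:
  "(line_edge_ideal E :: ('v set, 'k::comm_ring_1) mpoly set) = ideal_gen E (monom ` line.edge_exps)"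
proof -
  have vm: "var f * var g = (monom (var_exp f + var_exp g) :: ('v set, 'k) mpoly)" for f g
    by (simp add: var_eq_monom monom_add)
  have "{var f * var g :: ('v set, 'k) mpoly | f g. f \<in> E \<and> g \<in> E \<and> f \<noteq> g \<and> f \<inter> g \<noteq> {}}
      = monom ` {var_exp f + var_exp g | f g. line_adj E f g}"
    unfolding line_adj_def vm by auto
  then show ?thesis unfolding line_edge_ideal_def line.edge_exps_def by simp
qed

end

theorem proposition2p17:
  fixes V :: "'v set" and E :: "'v set set"
    and r :: "nat \<Rightarrow> nat" and a :: "nat \<Rightarrow> nat \<Rightarrow> int"
    and M :: "nat \<Rightarrow> nat \<Rightarrow> nat \<Rightarrow> ('v set, 'k::field) mpoly"
  assumes "is_tree V E"
    and "min_graded_free_res E (line_edge_ideal E) r a M"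
  shows "int (card {j. j < r 2 \<and> a 2 j = 3}) =
           (\<Sum>e\<in>E. int (((\<Sum>u\<in>e. vdeg E u) - 2) choose 2)) - (\<Sum>u\<in>V. int (vdeg E u choose 3))"
proof -
  interpret triangle_free_graph V E
    by (rule tree_triangle_free[OF assms(1)])
  interpret quadratic_monomial_resolution E line.edge_exps r a M
    using assms(2) finite_E line.finite_edge_exps line.mon_deg_edge_exps line.keys_edge_exps
    by unfold_locales (simp_all add: line_edge_ideal_eq_ideal_gen)
  let ?b = "card {j. j < r 2 \<and> a 2 j = 3}"
  let ?S2 = "\<Sum>e\<in>E. (\<Sum>u\<in>e. vdeg E u) - 2 choose 2" and ?S3 = "\<Sum>u\<in>V. vdeg E u choose 3"
  have alg: "?b + card (var_multiples E line.edge_exps) = card line.edge_exps * card E"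
    by (rule card_shift_3_plus_card_var_multiples)
  have "(\<Sum>e\<in>E. card (line.nbhd e) * (card (line.nbhd e) - 1)) = 2 * ?S2"
    unfolding sum_distrib_left by (rule sum.cong) (simp_all add: card_line_nbhd two_mult_choose_two)
  moreover have "card line.triangles = 6 * ?S3"
    unfolding sum_distrib_left card_line_triangles by (simp add: six_mult_choose_three)
  ultimately have "6 * card (var_multiples E line.edge_exps) + 3 * (2 * ?S2)
      = 6 * (card line.edge_exps * card E) + 6 * ?S3"
    using line.card_var_multiples_edge_exps_count by (simp only: mult.assoc)
  with alg have "?b + ?S3 = ?S2" by linarith
  then have "int ?b + int ?S3 = int ?S2" by (simp only: of_nat_add[symmetric])
  then show ?thesis by (simp add: of_nat_sum)
qed

end
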